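(* Let $k$ be a commutative ring, $H$ a cocommutative Hopf algebra over $k$ with antipode $S$, $A$ a cleft right $H$-comodule algebra with commutative $B=A^{\mathrm{co}H}$, regarded as a left $H$-module algebra via $h\cdot b=t(h_{(1)})bu(h_{(2)})$. Assume $\Omega_A\neq\emptyset$ and fix $t_0\in\Omega_A$; let $u_0=t_0\circ S$. Then $F:Z^1(H,B)\to\Omega_A$, $F(v)=v*t_0$, is a bijection with inverse $t\mapsto t*u_0$; $F$ maps cohomologous cocycles to equivalent elements of $\Omega_A$ and $F^{-1}$ maps equivalent elements to cohomologous cocycles. Hence $F$ induces a bijection $H^1(H,B)\to\overline{\Omega}_A$.
   Context: $\Delta(h)=h_{(1)}\otimes h_{(2)}$, $\rho(a)=a_{[0]}\otimes a_{[1]}$, $B=\{a:\rho(a)=a\otimes1\}$; convolution $(f*g)(h)=f(h_{(1)})g(h_{(2)})$. $A$ cleft: there is a convolution invertible $H$-colinear $t:H\to A$ ($\rho(t(h))=t(h_{(1)})\otimes h_{(2)}$) with inverse $u$; the module algebra structure on $B$ is independent of $t$. $\Omega_A$ is the set of $H$-colinear algebra maps $H\to A$; $t_1\sim t_2$ in $\Omega_A$ iff there is a unit $b\in U(B)$ with $bt_1(h)=t_2(h)b$ for all $h$; $\overline{\Omega}_A=\Omega_A/\sim$. $Z^1(H,B)$ is the group (under convolution) of convolution invertible $v:H\to B$ with $v(hk)=(h_{(1)}\cdot v(k))v(h_{(2)})$; $B^1(H,B)=\{f_b:b\in U(B)\}$ with $f_b(h)=(h\cdot b)b^{-1}$; $v\sim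 v_1$ (cohomologous) iff $v=f_b*v_1$ for some $b\in U(B)$; $H^1(H,B)=Z^1(H,B)/B^1(H,B)$. *)

theory Defs
  imports Main
begin

definition kmod :: "('k::comm_ring_1 \<Rightarrow> 'x::ab_group_add \<Rightarrow> 'x) \<Rightarrow> bool" where
  "kmod s \<longleftrightarrow> (\<forall>c x y. s c (x + y) = s c x + s c y) \<and> (\<forall>c d x. s (c + d) x = s c x + s d x)
     \<and> (\<forall>c d x. s c (s d x) = s (c * d) x) \<and> (\<forall>x. s 1 x = x)"

definition kalg :: "('k::comm_ring_1 \<Rightarrow> 'x::ring_1 \<Rightarrow> 'x) \<Rightarrow> bool" where
  "kalg s \<longleftrightarrow> kmod s \<and> (\<forall>c x y. s c (x * y) = s c x * y \<and> s c (x * y) = x * s c y)"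

definition klin :: "('k::comm_ring_1 \<Rightarrow> 'x::ab_group_add \<Rightarrow> 'x) \<Rightarrow> ('k \<Rightarrow> 'y::ab_group_add \<Rightarrow> 'y)
    \<Rightarrow> ('x \<Rightarrow> 'y) \<Rightarrow> bool" where
  "klin s1 s2 f \<longleftrightarrow> (\<forall>x y. f (x + y) = f x + f y) \<and> (\<forall>c x. f (s1 c x) = s2 c (f x))"

section \<open>Tensor products: elements represented by lists of simple tensors,
  equality = difference lies in the k-span of the (multi)linearity relations
  inside the free k-module on the product set\<close>

definition fdelta :: "'p \<Rightarrow> 'p \<Rightarrow> 'k::comm_ring_1" where
  "fdelta p = (\<lambda>q. if q = p then 1 else 0)"

definition formal :: "'p list \<Rightarrow> 'p \<Rightarrow> 'k::comm_ring_1" where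
  "formal xs = (\<lambda>q. sum_list (map (\<lambda>p. fdelta p q) xs))"

definition kspan :: "('p \<Rightarrow> 'k::comm_ring_1) set \<Rightarrow> ('p \<Rightarrow> 'k) set" where
  "kspan R = {f. \<exists>l. set (map snd l) \<subseteq> R \<and> f = (\<lambda>q. sum_list (map (\<lambda>(c, r). c * r q) l))}"

definition rel2 :: "('k::comm_ring_1 \<Rightarrow> 'x::ab_group_add \<Rightarrow> 'x) \<Rightarrow> ('k \<Rightarrow> 'y::ab_group_add \<Rightarrow> 'y)
    \<Rightarrow> ('x \<times> 'y \<Rightarrow> 'k) set" where
  "rel2 s1 s2 =
     {(\<lambda>q. fdelta (x + x', y) q - fdelta (x, y) q - fdelta (x', y) q) | x x' y. True}
   \<union> {(\<lambda>q. fdelta (x, y + y') q - fdelta (x, y) q - fdelta (x, y') q) | x y y'. True}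
   \<union> {(\<lambda>q. fdelta (s1 c x, y) q - c * fdelta (x, y) q) | c x y. True}
   \<union> {(\<lambda>q. fdelta (x, s2 c y) q - c * fdelta (x, y) q) | c x y. True}"

definition rel3 :: "('k::comm_ring_1 \<Rightarrow> 'x::ab_group_add \<Rightarrow> 'x) \<Rightarrow> ('k \<Rightarrow> 'y::ab_group_add \<Rightarrow> 'y)
    \<Rightarrow> ('k \<Rightarrow> 'z::ab_group_add \<Rightarrow> 'z) \<Rightarrow> ('x \<times> 'y \<times> 'z \<Rightarrow> 'k) set" where
  "rel3 s1 s2 s3 =
     {(\<lambda>q. fdelta (x + x', y, z) q - fdelta (x, y, z) q - fdelta (x', y, z) q) | x x' y z. True}
   \<union> {(\<lambda>q. fdelta (x, y + y', z) q - fdelta (x, y, z) q - fdelta (x, y', z) q) | x y y' z. True}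
   \<union> {(\<lambda>q. fdelta (x, y, z + z') q - fdelta (x, y, z) q - fdelta (x, y, z') q) | x y z z'. True}
   \<union> {(\<lambda>q. fdelta (s1 c x, y, z) q - c * fdelta (x, y, z) q) | c x y z. True}
   \<union> {(\<lambda>q. fdelta (x, s2 c y, z) q - c * fdelta (x, y, z) q) | c x y z. True}
   \<union> {(\<lambda>q. fdelta (x, y, s3 c z) q - c * fdelta (x, y, z) q) | c x y z. True}"

definition teq2 :: "('k::comm_ring_1 \<Rightarrow> 'x::ab_group_add \<Rightarrow> 'x) \<Rightarrow> ('k \<Rightarrow> 'y::ab_group_add \<Rightarrow> 'y)
    \<Rightarrow> ('x \<times> 'y) list \<Rightarrow> ('x \<times> 'y) list \<Rightarrow> bool" where
  "teq2 s1 s2 xs ys \<longleftrightarrow> (\<lambda>q. formal xs q - formal ys q) \<in> kspan (rel2 s1 s2)"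

definition teq3 :: "('k::comm_ring_1 \<Rightarrow> 'x::ab_group_add \<Rightarrow> 'x) \<Rightarrow> ('k \<Rightarrow> 'y::ab_group_add \<Rightarrow> 'y)
    \<Rightarrow> ('k \<Rightarrow> 'z::ab_group_add \<Rightarrow> 'z) \<Rightarrow> ('x \<times> 'y \<times> 'z) list \<Rightarrow> ('x \<times> 'y \<times> 'z) list \<Rightarrow> bool" where
  "teq3 s1 s2 s3 xs ys \<longleftrightarrow> (\<lambda>q. formal xs q - formal ys q) \<in> kspan (rel3 s1 s2 s3)"

definition tmul :: "('x::times \<times> 'y::times) list \<Rightarrow> ('x \<times> 'y) list \<Rightarrow> ('x \<times> 'y) list" where
  "tmul xs ys = [(a * c, b * d). (a, b) \<leftarrow> xs, (c, d) \<leftarrow> ys]"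

definition flip :: "('x \<times> 'y) list \<Rightarrow> ('y \<times> 'x) list" where
  "flip xs = map (\<lambda>(a, b). (b, a)) xs"

definition dl :: "('x \<Rightarrow> ('x1 \<times> 'x2) list) \<Rightarrow> ('x \<times> 'y) list \<Rightarrow> ('x1 \<times> 'x2 \<times> 'y) list" where
  "dl D xs = concat (map (\<lambda>(a, b). map (\<lambda>(a1, a2). (a1, a2, b)) (D a)) xs)"

definition dr :: "('y \<Rightarrow> ('y1 \<times> 'y2) list) \<Rightarrow> ('x \<times> 'y) list \<Rightarrow> ('x \<times> 'y1 \<times> 'y2) list" where
  "dr D xs = concat (map (\<lambda>(a, b). map (\<lambda>(b1, b2). (a, b1, b2)) (D b)) xs)"

text \<open>H (type 'h, scalar action sH) is a Hopf algebra over k with comultiplication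
  Delta (Delta h = sum of simple tensors, in Sweedler notation h_(1) (x) h_(2)),
  counit eps and antipode S.\<close>
definition hopf_alg :: "('k::comm_ring_1 \<Rightarrow> 'h::ring_1 \<Rightarrow> 'h) \<Rightarrow> ('h \<Rightarrow> ('h \<times> 'h) list)
    \<Rightarrow> ('h \<Rightarrow> 'k) \<Rightarrow> ('h \<Rightarrow> 'h) \<Rightarrow> bool" where
  "hopf_alg s Delta eps S \<longleftrightarrow> kalg s
   \<and> (\<forall>x y. teq2 s s (Delta (x + y)) (Delta x @ Delta y))
   \<and> (\<forall>c x. teq2 s s (Delta (s c x)) (map (\<lambda>(a, b). (s c a, b)) (Delta x)))
   \<and> (\<forall>h. teq3 s s s (dl Delta (Delta h)) (dr Delta (Delta h)))
   \<and> klin s (\<lambda>c d. c * d) eps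
   \<and> (\<forall>h. sum_list (map (\<lambda>(a, b). s (eps a) b) (Delta h)) = h)
   \<and> (\<forall>h. sum_list (map (\<lambda>(a, b). s (eps b) a) (Delta h)) = h)
   \<and> (\<forall>x y. teq2 s s (Delta (x * y)) (tmul (Delta x) (Delta y)))
   \<and> teq2 s s (Delta 1) [(1, 1)]
   \<and> (\<forall>x y. eps (x * y) = eps x * eps y) \<and> eps 1 = 1
   \<and> klin s s S
   \<and> (\<forall>h. sum_list (map (\<lambda>(a, b). S a * b) (Delta h)) = s (eps h) 1)
   \<and> (\<forall>h. sum_list (map (\<lambda>(a, b). a * S b) (Delta h)) = s (eps h) 1)"

definition cocommutative :: "('k::comm_ring_1 \<Rightarrow> 'h::ring_1 \<Rightarrow> 'h) \<Rightarrow> ('h \<Rightarrow> ('h \<times> 'h) list) \<Rightarrow> bool" where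
  "cocommutative s Delta \<longleftrightarrow> (\<forall>h. teq2 s s (Delta h) (flip (Delta h)))"

definition comod_alg :: "('k::comm_ring_1 \<Rightarrow> 'h::ring_1 \<Rightarrow> 'h) \<Rightarrow> ('h \<Rightarrow> ('h \<times> 'h) list)
    \<Rightarrow> ('h \<Rightarrow> 'k) \<Rightarrow> ('k \<Rightarrow> 'a::ring_1 \<Rightarrow> 'a) \<Rightarrow> ('a \<Rightarrow> ('a \<times> 'h) list) \<Rightarrow> bool" where
  "comod_alg sH Delta eps sA rho \<longleftrightarrow> kalg sA
   \<and> (\<forall>x y. teq2 sA sH (rho (x + y)) (rho x @ rho y))
   \<and> (\<forall>c x. teq2 sA sH (rho (sA c x)) (map (\<lambda>(a, b). (sA c a, b)) (rho x)))
   \<and> (\<forall>a. teq3 sA sH sH (dl rho (rho a)) (dr Delta (rho a)))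
   \<and> (\<forall>a. sum_list (map (\<lambda>(x, h). sA (eps h) x) (rho a)) = a)
   \<and> (\<forall>x y. teq2 sA sH (rho (x * y)) (tmul (rho x) (rho y)))
   \<and> teq2 sA sH (rho 1) [(1, 1)]"

definition coinv :: "('k::comm_ring_1 \<Rightarrow> 'h::ring_1 \<Rightarrow> 'h) \<Rightarrow> ('k \<Rightarrow> 'a::ring_1 \<Rightarrow> 'a)
    \<Rightarrow> ('a \<Rightarrow> ('a \<times> 'h) list) \<Rightarrow> 'a set" where
  "coinv sH sA rho = {a. teq2 sA sH (rho a) [(a, 1)]}"

definition conv :: "('h \<Rightarrow> ('h \<times> 'h) list) \<Rightarrow> ('h \<Rightarrow> 'a::ring_1) \<Rightarrow> ('h \<Rightarrow> 'a) \<Rightarrow> 'h \<Rightarrow> 'a" where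
  "conv Delta f g = (\<lambda>h. sum_list (map (\<lambda>(a, b). f a * g b) (Delta h)))"

definition cunit :: "('k::comm_ring_1 \<Rightarrow> 'a::ring_1 \<Rightarrow> 'a) \<Rightarrow> ('h \<Rightarrow> 'k) \<Rightarrow> 'h \<Rightarrow> 'a" where
  "cunit sA eps = (\<lambda>h. sA (eps h) 1)"

definition colinear :: "('k::comm_ring_1 \<Rightarrow> 'h::ring_1 \<Rightarrow> 'h) \<Rightarrow> ('k \<Rightarrow> 'a::ring_1 \<Rightarrow> 'a)
    \<Rightarrow> ('h \<Rightarrow> ('h \<times> 'h) list) \<Rightarrow> ('a \<Rightarrow> ('a \<times> 'h) list) \<Rightarrow> ('h \<Rightarrow> 'a) \<Rightarrow> bool" where
  "colinear sH sA Delta rho t \<longleftrightarrow> klin sH sA t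
     \<and> (\<forall>h. teq2 sA sH (rho (t h)) (map (\<lambda>(a, b). (t a, b)) (Delta h)))"

definition conv_inverse :: "('k::comm_ring_1 \<Rightarrow> 'h::ring_1 \<Rightarrow> 'h) \<Rightarrow> ('k \<Rightarrow> 'a::ring_1 \<Rightarrow> 'a)
    \<Rightarrow> ('h \<Rightarrow> ('h \<times> 'h) list) \<Rightarrow> ('h \<Rightarrow> 'k) \<Rightarrow> ('h \<Rightarrow> 'a) \<Rightarrow> ('h \<Rightarrow> 'a) \<Rightarrow> bool" where
  "conv_inverse sH sA Delta eps t u \<longleftrightarrow> klin sH sA u
     \<and> conv Delta t u = cunit sA eps \<and> conv Delta u t = cunit sA eps"

definition OmegaA :: "('k::comm_ring_1 \<Rightarrow> 'h::ring_1 \<Rightarrow> 'h) \<Rightarrow> ('k \<Rightarrow> 'a::ring_1 \<Rightarrow> 'a)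
    \<Rightarrow> ('h \<Rightarrow> ('h \<times> 'h) list) \<Rightarrow> ('a \<Rightarrow> ('a \<times> 'h) list) \<Rightarrow> ('h \<Rightarrow> 'a) set" where
  "OmegaA sH sA Delta rho = {t. colinear sH sA Delta rho t
     \<and> (\<forall>x y. t (x * y) = t x * t y) \<and> t 1 = 1}"

definition unitsB :: "'a::ring_1 set \<Rightarrow> 'a set" where
  "unitsB B = {b \<in> B. \<exists>b' \<in> B. b * b' = 1 \<and> b' * b = 1}"

definition omega_equiv :: "'a::ring_1 set \<Rightarrow> ('h \<Rightarrow> 'a) \<Rightarrow> ('h \<Rightarrow> 'a) \<Rightarrow> bool" where
  "omega_equiv B t1 t2 \<longleftrightarrow> (\<exists>b \<in> unitsB B. \<forall>h. b * t1 h = t2 h * b)"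

definition act :: "('h \<Rightarrow> ('h \<times> 'h) list) \<Rightarrow> ('h \<Rightarrow> 'a::ring_1) \<Rightarrow> ('h \<Rightarrow> 'a) \<Rightarrow> 'h \<Rightarrow> 'a \<Rightarrow> 'a" where
  "act Delta t u h b = sum_list (map (\<lambda>(x, y). t x * b * u y) (Delta h))"

definition Z1 :: "('k::comm_ring_1 \<Rightarrow> 'h::ring_1 \<Rightarrow> 'h) \<Rightarrow> ('k \<Rightarrow> 'a::ring_1 \<Rightarrow> 'a)
    \<Rightarrow> ('h \<Rightarrow> ('h \<times> 'h) list) \<Rightarrow> ('h \<Rightarrow> 'k) \<Rightarrow> ('a \<Rightarrow> ('a \<times> 'h) list)
    \<Rightarrow> ('h \<Rightarrow> 'a) \<Rightarrow> ('h \<Rightarrow> 'a) \<Rightarrow> ('h \<Rightarrow> 'a) set" where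
  "Z1 sH sA Delta eps rho t u = {v. klin sH sA v \<and> (\<forall>h. v h \<in> coinv sH sA rho)
     \<and> (\<exists>w. klin sH sA w \<and> (\<forall>h. w h \<in> coinv sH sA rho)
            \<and> conv Delta v w = cunit sA eps \<and> conv Delta w v = cunit sA eps)
     \<and> (\<forall>h k. v (h * k) = sum_list (map (\<lambda>(x, y). act Delta t u x (v k) * v y) (Delta h)))}"

definition cohomologous :: "('k::comm_ring_1 \<Rightarrow> 'h::ring_1 \<Rightarrow> 'h) \<Rightarrow> ('k \<Rightarrow> 'a::ring_1 \<Rightarrow> 'a)
    \<Rightarrow> ('h \<Rightarrow> ('h \<times> 'h) list) \<Rightarrow> ('a \<Rightarrow> ('a \<times> 'h) list)
    \<Rightarrow> ('h \<Rightarrow> 'a) \<Rightarrow> ('h \<Rightarrow> 'a) \<Rightarrow> ('h \<Rightarrow> 'a) \<Rightarrow> ('h \<Rightarrow> 'a) \<Rightarrow> bool" where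
  "cohomologous sH sA Delta rho t u v v1 \<longleftrightarrow>
     (\<exists>b b'. b \<in> coinv sH sA rho \<and> b' \<in> coinv sH sA rho \<and> b * b' = 1 \<and> b' * b = 1
        \<and> v = conv Delta (\<lambda>h. act Delta t u h b * b') v1)"

end

theory Submission
  imports Defs "HOL-Library.Multiset" "HOL-Library.Function_Algebras"
begin

(*
  A cocycle v is B-valued, so v * t0 is colinear, and it is multiplicative because the cocycle
  identity reads v(hk) = (h1 \<cdot> v(k)) v(h2) with h \<cdot> b = t0(h1) b t0(S h2).  That formula holds
  with any element of \<Omega>_A in place of the cleaving map t: writing t = f * s and u = (s \<circ> S) * g
  with B-valued f, g, the commutativity of convolution of B-valued maps (H cocommutative, B
  commutative) removes f and g.  Conversely s * u0 takes values in B because u0 = t0 \<circ> S satisfies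
  \<rho>(u0 h) = u0(h2) \<otimes> S(h1) (both sides are convolution inverses of \<rho> \<circ> t0 in Hom(H, A \<otimes> H)),
  and it is a cocycle because S is anti-multiplicative.  Since t0 * u0 = \<epsilon>, the two maps are
  inverse, and a unit b of B conjugating s1 into s2 is exactly the datum of the coboundary f_b
  relating the corresponding cocycles.

  Tensors are lists of simple tensors modulo the k-span of the bilinearity relations; every
  Hopf-algebraic identity enters through a Sweedler sum of a map that is balanced for these
  relations.
*)

lemma kmod_add: "kmod s \<Longrightarrow> s c (x + y) = s c x + s c y" by (simp add: kmod_def)
lemma kmod_add_scalar: "kmod s \<Longrightarrow> s (c + d) x = s c x + s d x" by (simp add: kmod_def)
lemma kmod_comp: "kmod s \<Longrightarrow> s c (s d x) = s (c * d) x" by (simp add: kmod_def)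
lemma kmod_one: "kmod s \<Longrightarrow> s 1 x = x" by (simp add: kmod_def)

lemma kmod_zero: "kmod s \<Longrightarrow> s c 0 = 0"
  using kmod_add[of s c 0 0] by simp

lemma kmod_zero_scalar: "kmod s \<Longrightarrow> s 0 x = 0"
  using kmod_add_scalar[of s 0 0 x] by simp

lemma kmod_minus_scalar: "kmod s \<Longrightarrow> s (- c) x = - s c x"
  using kmod_add_scalar[of s c "- c" x] kmod_zero_scalar[of s x]
  by (simp add: eq_neg_iff_add_eq_0 add.commute)

lemma kmod_diff_scalar: "kmod s \<Longrightarrow> s (c - d) x = s c x - s d x"
  using kmod_add_scalar[of s c "- d" x] kmod_minus_scalar[of s d x] by simp

lemma kmod_sum: "kmod s \<Longrightarrow> s c (sum f F) = (\<Sum>p\<in>F. s c (f p))"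
  by (induction F rule: infinite_finite_induct) (auto simp: kmod_zero kmod_add)

lemma kmod_sum_list: "kmod s \<Longrightarrow> s c (sum_list (map f xs)) = sum_list (map (\<lambda>x. s c (f x)) xs)"
  by (induction xs) (auto simp: kmod_zero kmod_add)

lemma kalg_kmod: "kalg s \<Longrightarrow> kmod s" by (simp add: kalg_def)
lemma kalg_mult_left: "kalg s \<Longrightarrow> s c x * y = s c (x * y)" unfolding kalg_def by metis
lemma kalg_mult_right: "kalg s \<Longrightarrow> x * s c y = s c (x * y)" unfolding kalg_def by metis

lemma klin_add: "klin s1 s2 f \<Longrightarrow> f (x + y) = f x + f y" by (simp add: klin_def)
lemma klin_scal: "klin s1 s2 f \<Longrightarrow> f (s1 c x) = s2 c (f x)" by (simp add: klin_def)

lemma klin_zero: "klin s1 s2 f \<Longrightarrow> f 0 = 0"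
  using klin_add[of s1 s2 f 0 0] by simp

lemma klin_sum_list: "klin s1 s2 f \<Longrightarrow> f (sum_list (map g xs)) = sum_list (map (\<lambda>x. f (g x)) xs)"
  by (induction xs) (auto simp: klin_zero klin_add)

lemma klin_id: "klin s s (\<lambda>x. x)" unfolding klin_def by auto

lemma klin_comp: "klin s1 s2 f \<Longrightarrow> klin s0 s1 g \<Longrightarrow> klin s0 s2 (\<lambda>x. f (g x))"
  unfolding klin_def by auto

lemma klin_mult_right: "kalg s \<Longrightarrow> klin s' s g \<Longrightarrow> klin s' s (\<lambda>x. g x * c)"
  unfolding klin_def by (auto simp: distrib_right kalg_mult_left)

lemma klin_mult_left: "kalg s \<Longrightarrow> klin s' s g \<Longrightarrow> klin s' s (\<lambda>x. c * g x)"
  unfolding klin_def by (auto simp: distrib_left kalg_mult_right)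

lemma klin_sum_list_fun:
  "kmod s2 \<Longrightarrow> (\<And>l. l \<in> set L \<Longrightarrow> klin s1 s2 (g l)) \<Longrightarrow> klin s1 s2 (\<lambda>x. sum_list (map (\<lambda>l. g l x) L))"
proof (induction L)
  case Nil then show ?case by (simp add: klin_def kmod_zero)
next
  case (Cons a L)
  then have "klin s1 s2 (g a)" "klin s1 s2 (\<lambda>x. sum_list (map (\<lambda>l. g l x) L))" by auto
  then show ?case using Cons.prems(1) unfolding klin_def by (auto simp: kmod_add algebra_simps)
qed

definition ksubmod :: "('k::comm_ring_1 \<Rightarrow> 'z::ab_group_add \<Rightarrow> 'z) \<Rightarrow> 'z set \<Rightarrow> bool" where
  "ksubmod s M \<longleftrightarrow> 0 \<in> M \<and> (\<forall>x\<in>M. \<forall>y\<in>M. x + y \<in> M) \<and> (\<forall>c. \<forall>x\<in>M. s c x \<in> M)"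

lemma ksubmod_sum_list: "ksubmod s M \<Longrightarrow> (\<forall>x\<in>set xs. f x \<in> M) \<Longrightarrow> sum_list (map f xs) \<in> M"
  by (induction xs) (auto simp: ksubmod_def)

lemma ksubmod_zero: "kmod s \<Longrightarrow> ksubmod s {0}"
  by (simp add: ksubmod_def kmod_zero)

lemma formal_Nil: "formal [] = (\<lambda>q. 0)" by (simp add: formal_def)
lemma formal_Cons: "formal (x # xs) = (\<lambda>q. fdelta x q + formal xs q)" by (simp add: formal_def)
lemma formal_append: "formal (xs @ ys) = (\<lambda>q. formal xs q + formal ys q)" by (simp add: formal_def)

lemma formal_concat: "formal (concat (map f xs)) = sum_list (map (\<lambda>p. formal (f p)) xs)"
  by (induction xs) (auto simp: formal_Nil formal_append zero_fun_def plus_fun_def)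

lemma formal_eq_count: "formal xs q = of_nat (count (mset xs) q)"
  by (induction xs) (simp_all add: formal_Nil formal_Cons fdelta_def)

lemma kspan_zero: "(\<lambda>q. 0) \<in> kspan R"
  unfolding kspan_def by (rule CollectI, rule exI[of _ "[]"]) simp

lemma kspan_base: "r \<in> R \<Longrightarrow> r \<in> kspan R"
  unfolding kspan_def by (rule CollectI, rule exI[of _ "[(1, r)]"]) simp

lemma kspan_add: "f \<in> kspan R \<Longrightarrow> g \<in> kspan R \<Longrightarrow> (\<lambda>q. f q + g q) \<in> kspan R"
proof -
  assume "f \<in> kspan R" "g \<in> kspan R"
  then obtain l1 l2 where "set (map snd l1) \<subseteq> R" "f = (\<lambda>q. sum_list (map (\<lambda>(c, r). c * r q) l1))"
    "set (map snd l2) \<subseteq> R" "g = (\<lambda>q. sum_list (map (\<lambda>(c, r). c * r q) l2))"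
    unfolding kspan_def by blast
  then show ?thesis unfolding kspan_def by (intro CollectI exI[of _ "l1 @ l2"]) auto
qed

lemma kspan_scal: "f \<in> kspan R \<Longrightarrow> (\<lambda>q. c * f q) \<in> kspan R"
proof -
  assume "f \<in> kspan R"
  then obtain l where l: "set (map snd l) \<subseteq> R" "f = (\<lambda>q. sum_list (map (\<lambda>(c, r). c * r q) l))"
    unfolding kspan_def by blast
  have "(\<lambda>q. c * f q) = (\<lambda>q. sum_list (map (\<lambda>(d, r). d * r q) (map (\<lambda>(d, r). (c * d, r)) l)))"
    unfolding l(2) by (rule ext, induction l) (auto simp: algebra_simps)
  moreover have "set (map snd (map (\<lambda>(d, r). (c * d, r)) l)) \<subseteq> R" using l(1) by auto
  ultimately show ?thesis unfolding kspan_def by blast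
qed

lemma kspan_cong: "f \<in> kspan R \<Longrightarrow> (\<And>q. f q = g q) \<Longrightarrow> g \<in> kspan R"
  by (metis ext)

lemma kspan_diff: "f \<in> kspan R \<Longrightarrow> g \<in> kspan R \<Longrightarrow> (\<lambda>q. f q - g q) \<in> kspan R"
  using kspan_add[of f R "\<lambda>q. - g q"] kspan_scal[of g R "- 1"] by simp

definition scal_fun :: "'k::comm_ring_1 \<Rightarrow> ('q \<Rightarrow> 'k) \<Rightarrow> 'q \<Rightarrow> 'k" where
  "scal_fun c g = (\<lambda>q. c * g q)"

lemma ksubmod_kspan: "ksubmod scal_fun (kspan R)"
  unfolding ksubmod_def scal_fun_def using kspan_zero[of R] kspan_add[of _ R] kspan_scal[of _ R]
  by (auto simp: zero_fun_def plus_fun_def)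

lemma kmod_scal_fun: "kmod scal_fun"
  unfolding kmod_def scal_fun_def by (auto simp: fun_eq_iff algebra_simps)

section \<open>Balanced maps descend to the tensor product\<close>

definition formal_eval :: "('k::comm_ring_1 \<Rightarrow> 'z::ab_group_add \<Rightarrow> 'z) \<Rightarrow> ('p \<Rightarrow> 'z) \<Rightarrow> 'p set
    \<Rightarrow> ('p \<Rightarrow> 'k) \<Rightarrow> 'z" where
  "formal_eval s e F g = (\<Sum>p\<in>F. s (g p) (e p))"

lemma formal_eval_add:
  "kmod s \<Longrightarrow> formal_eval s e F (\<lambda>q. g1 q + g2 q) = formal_eval s e F g1 + formal_eval s e F g2"
  by (simp add: formal_eval_def kmod_add_scalar sum.distrib)

lemma formal_eval_diff:
  "kmod s \<Longrightarrow> formal_eval s e F (\<lambda>q. g1 q - g2 q) = formal_eval s e F g1 - formal_eval s e F g2"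
  by (simp add: formal_eval_def kmod_diff_scalar sum_subtractf)

lemma formal_eval_scal: "kmod s \<Longrightarrow> formal_eval s e F (\<lambda>q. c * g q) = s c (formal_eval s e F g)"
  by (simp add: formal_eval_def kmod_sum kmod_comp)

lemma formal_eval_zero: "kmod s \<Longrightarrow> formal_eval s e F (\<lambda>q. 0) = 0"
  by (simp add: formal_eval_def kmod_zero_scalar)

lemma formal_eval_fdelta: "kmod s \<Longrightarrow> finite F \<Longrightarrow> a \<in> F \<Longrightarrow> formal_eval s e F (fdelta a) = e a"
proof -
  assume k: "kmod s" and "finite F" "a \<in> F"
  have "formal_eval s e F (fdelta a) = (\<Sum>p\<in>F. if a = p then e p else 0)"
    unfolding formal_eval_def fdelta_def by (rule sum.cong) (auto simp: kmod_one[OF k] kmod_zero_scalar[OF k])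
  with \<open>finite F\<close> \<open>a \<in> F\<close> show ?thesis by simp
qed

lemma formal_eval_formal:
  "kmod s \<Longrightarrow> finite F \<Longrightarrow> set xs \<subseteq> F \<Longrightarrow> formal_eval s e F (formal xs) = sum_list (map e xs)"
  by (induction xs) (simp_all add: formal_Nil formal_Cons formal_eval_zero formal_eval_add formal_eval_fdelta)

lemma formal_eval_lincomb: "kmod s \<Longrightarrow> formal_eval s e F (\<lambda>q. sum_list (map (\<lambda>(c, r). c * r q) l))
     = sum_list (map (\<lambda>(c, r). s c (formal_eval s e F r)) l)"
  by (induction l) (auto simp: formal_eval_zero formal_eval_add formal_eval_scal)

lemma formal_eval_fdelta3: "kmod s \<Longrightarrow> finite F \<Longrightarrow> a \<in> F \<Longrightarrow> b \<in> F \<Longrightarrow> c \<in> F \<Longrightarrow>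
  formal_eval s e F (\<lambda>q. fdelta a q - fdelta b q - fdelta c q) = e a - (e b + e c)"
  using formal_eval_diff[of s e F "\<lambda>q. fdelta a q - fdelta b q" "fdelta c"]
    formal_eval_diff[of s e F "fdelta a" "fdelta b"] by (simp add: formal_eval_fdelta)

lemma formal_eval_fdelta2: "kmod s \<Longrightarrow> finite F \<Longrightarrow> a \<in> F \<Longrightarrow> b \<in> F \<Longrightarrow>
  formal_eval s e F (\<lambda>q. fdelta a q - c * fdelta b q) = e a - s c (e b)"
  by (simp add: formal_eval_diff formal_eval_scal formal_eval_fdelta)

text \<open>The free module on the product set is modelled by functions without a finiteness
  condition, so a relation is evaluated on some finite set containing its support; the
  proof picks one finite set large enough for all relations of the given combination.\<close>

lemma kspan_sum_list_diff_mem: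
  assumes km: "kmod s" and sm: "ksubmod s M"
    and R: "\<And>r. r \<in> R \<Longrightarrow> \<exists>P. finite P \<and> (\<forall>F. finite F \<longrightarrow> P \<subseteq> F \<longrightarrow> formal_eval s e F r \<in> M)"
    and sp: "(\<lambda>q. formal xs q - formal ys q) \<in> kspan R"
  shows "sum_list (map e xs) - sum_list (map e ys) \<in> M"
proof -
  obtain l where l: "set (map snd l) \<subseteq> R"
    and eq: "(\<lambda>q. formal xs q - formal ys q) = (\<lambda>q. sum_list (map (\<lambda>(c, r). c * r q) l))"
    using sp unfolding kspan_def by blast
  obtain P where P: "\<And>r. r \<in> set (map snd l) \<Longrightarrow>
      finite (P r) \<and> (\<forall>F. finite F \<longrightarrow> P r \<subseteq> F \<longrightarrow> formal_eval s e F r \<in> M)"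
    using bchoice[of "set (map snd l)"] R l by (metis subsetD)
  define F where "F = set xs \<union> set ys \<union> \<Union>(P ` set (map snd l))"
  have fin: "finite F" unfolding F_def using P by auto
  have "set xs \<subseteq> F" "set ys \<subseteq> F" unfolding F_def by auto
  then have "sum_list (map e xs) - sum_list (map e ys) = formal_eval s e F (\<lambda>q. formal xs q - formal ys q)"
    using formal_eval_diff[OF km, of e F "formal xs" "formal ys"] formal_eval_formal[OF km fin] by simp
  also have "\<dots> = sum_list (map (\<lambda>(c, r). s c (formal_eval s e F r)) l)"
    unfolding eq by (rule formal_eval_lincomb[OF km])
  also have "\<dots> \<in> M"
  proof (rule ksubmod_sum_list[OF sm], rule ballI)
    fix x assume x: "x \<in> set l"
    obtain c r where xc: "x = (c, r)" by force
    have r: "r \<in> set (map snd l)" using x xc by force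
    moreover have "P r \<subseteq> F" unfolding F_def using r by blast
    ultimately have "formal_eval s e F r \<in> M" using P fin by blast
    then show "(case x of (c, r) \<Rightarrow> s c (formal_eval s e F r)) \<in> M"
      using sm xc by (simp add: ksubmod_def)
  qed
  finally show ?thesis .
qed

lemma rel2_eval_mem:
  fixes sZ :: "'k::comm_ring_1 \<Rightarrow> 'z::ab_group_add \<Rightarrow> 'z" and s1 :: "'k \<Rightarrow> 'x::ab_group_add \<Rightarrow> 'x"
    and s2 :: "'k \<Rightarrow> 'y::ab_group_add \<Rightarrow> 'y"
  assumes km: "kmod sZ"
    and a1: "\<And>x x' y. e (x + x', y) - (e (x, y) + e (x', y)) \<in> M"
    and a2: "\<And>x y y'. e (x, y + y') - (e (x, y) + e (x, y')) \<in> M"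
    and a3: "\<And>c x y. e (s1 c x, y) - sZ c (e (x, y)) \<in> M"
    and a4: "\<And>c x y. e (x, s2 c y) - sZ c (e (x, y)) \<in> M"
    and r: "r \<in> rel2 s1 s2"
  shows "\<exists>P. finite P \<and> (\<forall>F. finite F \<longrightarrow> P \<subseteq> F \<longrightarrow> formal_eval sZ e F r \<in> M)"
  using r unfolding rel2_def
proof (elim UnE CollectE exE conjE)
  fix x x' y assume "r = (\<lambda>q. fdelta (x + x', y) q - fdelta (x, y) q - fdelta (x', y) q)"
  then show ?thesis using a1
    by (intro exI[of _ "{(x + x', y), (x, y), (x', y)}"]) (simp add: formal_eval_fdelta3[OF km])
next
  fix x y y' assume "r = (\<lambda>q. fdelta (x, y + y') q - fdelta (x, y) q - fdelta (x, y') q)"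
  then show ?thesis using a2
    by (intro exI[of _ "{(x, y + y'), (x, y), (x, y')}"]) (simp add: formal_eval_fdelta3[OF km])
next
  fix c x y assume "r = (\<lambda>q. fdelta (s1 c x, y) q - c * fdelta (x, y) q)"
  then show ?thesis using a3
    by (intro exI[of _ "{(s1 c x, y), (x, y)}"]) (simp add: formal_eval_fdelta2[OF km])
next
  fix c x y assume "r = (\<lambda>q. fdelta (x, s2 c y) q - c * fdelta (x, y) q)"
  then show ?thesis using a4
    by (intro exI[of _ "{(x, s2 c y), (x, y)}"]) (simp add: formal_eval_fdelta2[OF km])
qed

lemma rel3_eval_mem:
  fixes sZ :: "'k::comm_ring_1 \<Rightarrow> 'z::ab_group_add \<Rightarrow> 'z" and s1 :: "'k \<Rightarrow> 'x::ab_group_add \<Rightarrow> 'x"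
    and s2 :: "'k \<Rightarrow> 'y::ab_group_add \<Rightarrow> 'y" and s3 :: "'k \<Rightarrow> 'w::ab_group_add \<Rightarrow> 'w"
  assumes km: "kmod sZ"
    and a1: "\<And>x x' y z. e (x + x', y, z) - (e (x, y, z) + e (x', y, z)) \<in> M"
    and a2: "\<And>x y y' z. e (x, y + y', z) - (e (x, y, z) + e (x, y', z)) \<in> M"
    and a3: "\<And>x y z z'. e (x, y, z + z') - (e (x, y, z) + e (x, y, z')) \<in> M"
    and a4: "\<And>c x y z. e (s1 c x, y, z) - sZ c (e (x, y, z)) \<in> M"
    and a5: "\<And>c x y z. e (x, s2 c y, z) - sZ c (e (x, y, z)) \<in> M"
    and a6: "\<And>c x y z. e (x, y, s3 c z) - sZ c (e (x, y, z)) \<in> M"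
    and r: "r \<in> rel3 s1 s2 s3"
  shows "\<exists>P. finite P \<and> (\<forall>F. finite F \<longrightarrow> P \<subseteq> F \<longrightarrow> formal_eval sZ e F r \<in> M)"
  using r unfolding rel3_def
proof (elim UnE CollectE exE conjE)
  fix x x' y z assume "r = (\<lambda>q. fdelta (x + x', y, z) q - fdelta (x, y, z) q - fdelta (x', y, z) q)"
  then show ?thesis using a1
    by (intro exI[of _ "{(x + x', y, z), (x, y, z), (x', y, z)}"]) (simp add: formal_eval_fdelta3[OF km])
next
  fix x y y' z assume "r = (\<lambda>q. fdelta (x, y + y', z) q - fdelta (x, y, z) q - fdelta (x, y', z) q)"
  then show ?thesis using a2
    by (intro exI[of _ "{(x, y + y', z), (x, y, z), (x, y', z)}"]) (simp add: formal_eval_fdelta3[OF km])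
next
  fix x y z z' assume "r = (\<lambda>q. fdelta (x, y, z + z') q - fdelta (x, y, z) q - fdelta (x, y, z') q)"
  then show ?thesis using a3
    by (intro exI[of _ "{(x, y, z + z'), (x, y, z), (x, y, z')}"]) (simp add: formal_eval_fdelta3[OF km])
next
  fix c x y z assume "r = (\<lambda>q. fdelta (s1 c x, y, z) q - c * fdelta (x, y, z) q)"
  then show ?thesis using a4
    by (intro exI[of _ "{(s1 c x, y, z), (x, y, z)}"]) (simp add: formal_eval_fdelta2[OF km])
next
  fix c x y z assume "r = (\<lambda>q. fdelta (x, s2 c y, z) q - c * fdelta (x, y, z) q)"
  then show ?thesis using a5
    by (intro exI[of _ "{(x, s2 c y, z), (x, y, z)}"]) (simp add: formal_eval_fdelta2[OF km])
next
  fix c x y z assume "r = (\<lambda>q. fdelta (x, y, s3 c z) q - c * fdelta (x, y, z) q)"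
  then show ?thesis using a6
    by (intro exI[of _ "{(x, y, s3 c z), (x, y, z)}"]) (simp add: formal_eval_fdelta2[OF km])
qed

lemma teq2_refl: "teq2 s1 s2 xs xs"
  unfolding teq2_def by (rule kspan_cong[OF kspan_zero]) simp

lemma teq2_sym: "teq2 s1 s2 xs ys \<Longrightarrow> teq2 s1 s2 ys xs"
  unfolding teq2_def by (erule kspan_cong[OF kspan_scal[where c = "- 1"]]) simp

lemma teq2_trans [trans]: "teq2 s1 s2 xs ys \<Longrightarrow> teq2 s1 s2 ys zs \<Longrightarrow> teq2 s1 s2 xs zs"
  unfolding teq2_def by (drule (1) kspan_add) (erule kspan_cong, simp)

lemma teq2_append: "teq2 s1 s2 xs ys \<Longrightarrow> teq2 s1 s2 xs' ys' \<Longrightarrow> teq2 s1 s2 (xs @ xs') (ys @ ys')"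
  unfolding teq2_def by (drule (1) kspan_add) (erule kspan_cong, simp add: formal_append)

lemma teq2_append_cancel: "teq2 s1 s2 (xs @ ys) (xs @ zs) \<Longrightarrow> teq2 s1 s2 ys zs"
  unfolding teq2_def by (erule kspan_cong) (simp add: formal_append)

lemma teq2_concat: "(\<And>x. x \<in> set L \<Longrightarrow> teq2 s1 s2 (f x) (g x)) \<Longrightarrow>
    teq2 s1 s2 (concat (map f L)) (concat (map g L))"
  by (induction L) (auto simp: teq2_refl intro: teq2_append)

lemma teq2_mset: "mset xs = mset ys \<Longrightarrow> teq2 s1 s2 xs ys"
  unfolding teq2_def by (intro kspan_cong[OF kspan_zero]) (simp add: formal_eq_count)

lemma teq2_map: "(\<And>l. l \<in> set L \<Longrightarrow> teq2 s1 s2 [f l] [g l]) \<Longrightarrow> teq2 s1 s2 (map f L) (map g L)"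
  using teq2_concat[of L s1 s2 "\<lambda>l. [f l]" "\<lambda>l. [g l]"] by (simp add: map_concat)

lemma teq2_map_split: "(\<And>l. l \<in> set L \<Longrightarrow> teq2 s1 s2 [f l] [g l, k l]) \<Longrightarrow>
    teq2 s1 s2 (map f L) (map g L @ map k L)"
proof -
  assume "\<And>l. l \<in> set L \<Longrightarrow> teq2 s1 s2 [f l] [g l, k l]"
  then have "teq2 s1 s2 (concat (map (\<lambda>l. [f l]) L)) (concat (map (\<lambda>l. [g l, k l]) L))"
    by (rule teq2_concat)
  also have "teq2 s1 s2 (concat (map (\<lambda>l. [g l, k l]) L)) (map g L @ map k L)"
    by (rule teq2_mset) (induction L, auto)
  finally show ?thesis by (simp add: map_concat)
qed

lemma rel2_add_left: "(\<lambda>q. fdelta (x + x', y) q - fdelta (x, y) q - fdelta (x', y) q) \<in> rel2 s1 s2"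
  unfolding rel2_def by blast
lemma rel2_add_right: "(\<lambda>q. fdelta (x, y + y') q - fdelta (x, y) q - fdelta (x, y') q) \<in> rel2 s1 s2"
  unfolding rel2_def by blast
lemma rel2_scal_left: "(\<lambda>q. fdelta (s1 c x, y) q - c * fdelta (x, y) q) \<in> rel2 s1 s2"
  unfolding rel2_def by blast
lemma rel2_scal_right: "(\<lambda>q. fdelta (x, s2 c y) q - c * fdelta (x, y) q) \<in> rel2 s1 s2"
  unfolding rel2_def by blast

lemma teq2_add_left: "teq2 s1 s2 [(x + x', y)] [(x, y), (x', y)]"
  unfolding teq2_def
  by (rule kspan_cong[OF kspan_base[OF rel2_add_left]]) (simp add: formal_def algebra_simps)

lemma teq2_add_right: "teq2 s1 s2 [(x, y + y')] [(x, y), (x, y')]"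
  unfolding teq2_def
  by (rule kspan_cong[OF kspan_base[OF rel2_add_right]]) (simp add: formal_def algebra_simps)

lemma teq2_scal_right_left: "teq2 s1 s2 [(x, s2 c y)] [(s1 c x, y)]"
  unfolding teq2_def
  by (rule kspan_cong[OF kspan_diff[OF kspan_base[OF rel2_scal_right[where c = c and x = x and y = y]]
        kspan_base[OF rel2_scal_left[where c = c and x = x and y = y]]]]) (simp add: formal_def)

lemma teq2_zero_left: "teq2 s1 s2 [(0, y)] []"
  using teq2_add_left[of s1 s2 0 0 y] unfolding teq2_def
  by (elim kspan_cong[OF kspan_scal[where c = "- 1"]]) (simp add: formal_def)

lemma teq2_zero_right: "teq2 s1 s2 [(x, 0)] []"
  using teq2_add_right[of s1 s2 x 0 0] unfolding teq2_def
  by (elim kspan_cong[OF kspan_scal[where c = "- 1"]]) (simp add: formal_def)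

lemma teq2_sum_list_left: "teq2 s1 s2 [(sum_list (map f L), y)] (map (\<lambda>l. (f l, y)) L)"
proof (induction L)
  case Nil then show ?case by (simp add: teq2_zero_left)
next
  case (Cons a L)
  have "teq2 s1 s2 [(f a + sum_list (map f L), y)] ([(f a, y)] @ [(sum_list (map f L), y)])"
    using teq2_add_left by simp
  also have "teq2 s1 s2 \<dots> ([(f a, y)] @ map (\<lambda>l. (f l, y)) L)"
    by (rule teq2_append[OF teq2_refl Cons.IH])
  finally show ?case by simp
qed

lemma teq2_sum_list_right: "teq2 s1 s2 [(x, sum_list (map f L))] (map (\<lambda>l. (x, f l)) L)"
proof (induction L)
  case Nil then show ?case by (simp add: teq2_zero_right)
next
  case (Cons a L)
  have "teq2 s1 s2 [(x, f a + sum_list (map f L))] ([(x, f a)] @ [(x, sum_list (map f L))])"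
    using teq2_add_right by simp
  also have "teq2 s1 s2 \<dots> ([(x, f a)] @ map (\<lambda>l. (x, f l)) L)"
    by (rule teq2_append[OF teq2_refl Cons.IH])
  finally show ?case by simp
qed

abbreviation scl :: "('k \<Rightarrow> 'x \<Rightarrow> 'x) \<Rightarrow> 'k \<Rightarrow> ('x \<times> 'y) list \<Rightarrow> ('x \<times> 'y) list" where
  "scl s c xs \<equiv> map (\<lambda>(a, b). (s c a, b)) xs"

lemma kspan_formal_scl: "(\<lambda>q. formal (scl s1 c L) q - c * formal L q) \<in> kspan (rel2 s1 s2)"
proof (induction L)
  case Nil then show ?case by (simp add: formal_Nil kspan_zero)
next
  case (Cons p L)
  obtain a b where p: "p = (a, b)" by force
  show ?case
    by (rule kspan_cong[OF kspan_add[OF kspan_base[OF rel2_scal_left[of s1 c a b s2]] Cons.IH]])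
       (simp add: p formal_Cons algebra_simps)
qed

lemma teq2_concat_map_balanced:
  fixes \<Phi> :: "'x::ab_group_add \<Rightarrow> 'y::ab_group_add \<Rightarrow> ('u::ab_group_add \<times> 'v::ab_group_add) list"
    and s1 :: "'k::comm_ring_1 \<Rightarrow> 'x \<Rightarrow> 'x"
  assumes h: "teq2 s1 s2 xs ys"
    and a1: "\<And>x x' y. teq2 t1 t2 (\<Phi> (x + x') y) (\<Phi> x y @ \<Phi> x' y)"
    and a2: "\<And>x y y'. teq2 t1 t2 (\<Phi> x (y + y')) (\<Phi> x y @ \<Phi> x y')"
    and a3: "\<And>c x y. teq2 t1 t2 (\<Phi> (s1 c x) y) (scl t1 c (\<Phi> x y))"
    and a4: "\<And>c x y. teq2 t1 t2 (\<Phi> x (s2 c y)) (scl t1 c (\<Phi> x y))"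
  shows "teq2 t1 t2 (concat (map (\<lambda>(a, b). \<Phi> a b) xs)) (concat (map (\<lambda>(a, b). \<Phi> a b) ys))"
proof -
  let ?e = "\<lambda>p. formal (case p of (a, b) \<Rightarrow> \<Phi> a b) :: 'u \<times> 'v \<Rightarrow> 'k"
  let ?K = "kspan (rel2 t1 t2)"
  have c1: "\<And>x x' y. ?e (x + x', y) - (?e (x, y) + ?e (x', y)) \<in> ?K"
    using a1 unfolding teq2_def by (simp add: formal_append plus_fun_def fun_diff_def)
  have c2: "\<And>x y y'. ?e (x, y + y') - (?e (x, y) + ?e (x, y')) \<in> ?K"
    using a2 unfolding teq2_def by (simp add: formal_append plus_fun_def fun_diff_def)
  have c3: "?e (s1 c x, y) - scal_fun c (?e (x, y)) \<in> ?K" for c x y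
    using kspan_add[OF a3[where c = c and x = x and y = y, unfolded teq2_def] kspan_formal_scl[of t1 c "\<Phi> x y" t2]]
    by (elim kspan_cong) (simp add: scal_fun_def fun_diff_def)
  have c4: "?e (x, s2 c y) - scal_fun c (?e (x, y)) \<in> ?K" for c x y
    using kspan_add[OF a4[where c = c and x = x and y = y, unfolded teq2_def] kspan_formal_scl[of t1 c "\<Phi> x y" t2]]
    by (elim kspan_cong) (simp add: scal_fun_def fun_diff_def)
  have "sum_list (map ?e xs) - sum_list (map ?e ys) \<in> ?K"
    by (rule kspan_sum_list_diff_mem[OF kmod_scal_fun ksubmod_kspan
          rel2_eval_mem[OF kmod_scal_fun c1 c2 c3 c4] h[unfolded teq2_def]])
  then show ?thesis unfolding teq2_def formal_concat by (simp add: fun_diff_def)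
qed

lemma teq3_concat_map_balanced:
  fixes \<Phi> :: "'x::ab_group_add \<Rightarrow> 'y::ab_group_add \<Rightarrow> 'w::ab_group_add \<Rightarrow> ('u::ab_group_add \<times> 'v::ab_group_add) list"
    and s1 :: "'k::comm_ring_1 \<Rightarrow> 'x \<Rightarrow> 'x"
  assumes h: "teq3 s1 s2 s3 xs ys"
    and a1: "\<And>x x' y z. teq2 t1 t2 (\<Phi> (x + x') y z) (\<Phi> x y z @ \<Phi> x' y z)"
    and a2: "\<And>x y y' z. teq2 t1 t2 (\<Phi> x (y + y') z) (\<Phi> x y z @ \<Phi> x y' z)"
    and a3: "\<And>x y z z'. teq2 t1 t2 (\<Phi> x y (z + z')) (\<Phi> x y z @ \<Phi> x y z')"
    and a4: "\<And>c x y z. teq2 t1 t2 (\<Phi> (s1 c x) y z) (scl t1 c (\<Phi> x y z))"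
    and a5: "\<And>c x y z. teq2 t1 t2 (\<Phi> x (s2 c y) z) (scl t1 c (\<Phi> x y z))"
    and a6: "\<And>c x y z. teq2 t1 t2 (\<Phi> x y (s3 c z)) (scl t1 c (\<Phi> x y z))"
  shows "teq2 t1 t2 (concat (map (\<lambda>(a, b, c). \<Phi> a b c) xs)) (concat (map (\<lambda>(a, b, c). \<Phi> a b c) ys))"
proof -
  let ?e = "\<lambda>p. formal (case p of (a, b, c) \<Rightarrow> \<Phi> a b c) :: 'u \<times> 'v \<Rightarrow> 'k"
  let ?K = "kspan (rel2 t1 t2)"
  have c1: "\<And>x x' y z. ?e (x + x', y, z) - (?e (x, y, z) + ?e (x', y, z)) \<in> ?K"
    using a1 unfolding teq2_def by (simp add: formal_append plus_fun_def fun_diff_def)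
  have c2: "\<And>x y y' z. ?e (x, y + y', z) - (?e (x, y, z) + ?e (x, y', z)) \<in> ?K"
    using a2 unfolding teq2_def by (simp add: formal_append plus_fun_def fun_diff_def)
  have c3: "\<And>x y z z'. ?e (x, y, z + z') - (?e (x, y, z) + ?e (x, y, z')) \<in> ?K"
    using a3 unfolding teq2_def by (simp add: formal_append plus_fun_def fun_diff_def)
  have c4: "?e (s1 c x, y, z) - scal_fun c (?e (x, y, z)) \<in> ?K" for c x y z
    using kspan_add[OF a4[where c = c and x = x and y = y and z = z, unfolded teq2_def]
        kspan_formal_scl[of t1 c "\<Phi> x y z" t2]]
    by (elim kspan_cong) (simp add: scal_fun_def fun_diff_def)
  have c5: "?e (x, s2 c y, z) - scal_fun c (?e (x, y, z)) \<in> ?K" for c x y z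
    using kspan_add[OF a5[where c = c and x = x and y = y and z = z, unfolded teq2_def]
        kspan_formal_scl[of t1 c "\<Phi> x y z" t2]]
    by (elim kspan_cong) (simp add: scal_fun_def fun_diff_def)
  have c6: "?e (x, y, s3 c z) - scal_fun c (?e (x, y, z)) \<in> ?K" for c x y z
    using kspan_add[OF a6[where c = c and x = x and y = y and z = z, unfolded teq2_def]
        kspan_formal_scl[of t1 c "\<Phi> x y z" t2]]
    by (elim kspan_cong) (simp add: scal_fun_def fun_diff_def)
  have "sum_list (map ?e xs) - sum_list (map ?e ys) \<in> ?K"
    by (rule kspan_sum_list_diff_mem[OF kmod_scal_fun ksubmod_kspan
          rel3_eval_mem[OF kmod_scal_fun c1 c2 c3 c4 c5 c6] h[unfolded teq3_def]])
  then show ?thesis unfolding teq2_def formal_concat by (simp add: fun_diff_def)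
qed

lemma teq2_sum_list_eq:
  fixes f :: "'x::ab_group_add \<Rightarrow> 'y::ab_group_add \<Rightarrow> 'z::ab_group_add"
    and s1 :: "'k::comm_ring_1 \<Rightarrow> 'x \<Rightarrow> 'x"
  assumes km: "kmod sZ" and h: "teq2 s1 s2 xs ys"
    and l1: "\<And>y. klin s1 sZ (\<lambda>x. f x y)" and l2: "\<And>x. klin s2 sZ (f x)"
  shows "sum_list (map (\<lambda>(a, b). f a b) xs) = sum_list (map (\<lambda>(a, b). f a b) ys)"
proof -
  let ?e = "\<lambda>p. case p of (a, b) \<Rightarrow> f a b"
  have "sum_list (map ?e xs) - sum_list (map ?e ys) \<in> {0}"
    by (rule kspan_sum_list_diff_mem[OF km ksubmod_zero[OF km] rel2_eval_mem[OF km] h[unfolded teq2_def]])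
       (simp_all add: klin_add[OF l1] klin_add[OF l2] klin_scal[OF l1] klin_scal[OF l2])
  then show ?thesis by simp
qed

lemma teq3_sum_list_eq:
  fixes f :: "'x::ab_group_add \<Rightarrow> 'y::ab_group_add \<Rightarrow> 'w::ab_group_add \<Rightarrow> 'z::ab_group_add"
    and s1 :: "'k::comm_ring_1 \<Rightarrow> 'x \<Rightarrow> 'x"
  assumes km: "kmod sZ" and h: "teq3 s1 s2 s3 xs ys"
    and l1: "\<And>y z. klin s1 sZ (\<lambda>x. f x y z)" and l2: "\<And>x z. klin s2 sZ (\<lambda>y. f x y z)"
    and l3: "\<And>x y. klin s3 sZ (f x y)"
  shows "sum_list (map (\<lambda>(a, b, c). f a b c) xs) = sum_list (map (\<lambda>(a, b, c). f a b c) ys)"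
proof -
  let ?e = "\<lambda>p. case p of (a, b, c) \<Rightarrow> f a b c"
  have "sum_list (map ?e xs) - sum_list (map ?e ys) \<in> {0}"
    by (rule kspan_sum_list_diff_mem[OF km ksubmod_zero[OF km] rel3_eval_mem[OF km] h[unfolded teq3_def]])
       (simp_all add: klin_add[OF l1] klin_add[OF l2] klin_add[OF l3]
         klin_scal[OF l1] klin_scal[OF l2] klin_scal[OF l3])
  then show ?thesis by simp
qed

lemma teq2_scl:
  assumes km: "kmod s1" and h: "teq2 s1 s2 xs ys"
  shows "teq2 s1 s2 (scl s1 c xs) (scl s1 c ys)"
proof -
  have "teq2 s1 s2 (concat (map (\<lambda>(a, b). [(s1 c a, b)]) xs)) (concat (map (\<lambda>(a, b). [(s1 c a, b)]) ys))"
  proof (rule teq2_concat_map_balanced[OF h])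
    fix d x y
    have "teq2 s1 s2 [(s1 c x, s2 d y)] [(s1 d (s1 c x), y)]" by (rule teq2_scal_right_left)
    then show "teq2 s1 s2 [(s1 c x, s2 d y)] (scl s1 d [(s1 c x, y)])" by simp
  qed (simp_all add: kmod_add[OF km] kmod_comp[OF km] mult.commute teq2_add_left teq2_add_right teq2_refl)
  then show ?thesis by (simp add: case_prod_unfold map_concat[symmetric])
qed

lemma tmul_Nil [simp]: "tmul [] ys = []" by (simp add: tmul_def)

lemma tmul_Cons: "tmul (p # xs) ys = map (\<lambda>(c, d). (fst p * c, snd p * d)) ys @ tmul xs ys"
  by (cases p) (simp add: tmul_def case_prod_beta)

lemma tmul_append_left: "tmul (xs @ xs') ys = tmul xs ys @ tmul xs' ys"
  by (induction xs) (simp_all add: tmul_Cons)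

lemma tmul_concat_left: "tmul (concat xss) ys = concat (map (\<lambda>xs. tmul xs ys) xss)"
  by (induction xss) (simp_all add: tmul_append_left)

lemma tmul_single_left: "tmul [(a, b)] ys = map (\<lambda>(c, d). (a * c, b * d)) ys"
  by (simp add: tmul_Cons)

lemma tmul_Nil_right [simp]: "tmul xs [] = []"
  by (induction xs) (simp_all add: tmul_Cons)

lemma tmul_single_right: "tmul xs [(c, d)] = map (\<lambda>(a, b). (a * c, b * d)) xs"
  by (induction xs) (auto simp: tmul_Cons)

lemma mset_tmul_append_right: "mset (tmul xs (ys @ zs)) = mset (tmul xs ys @ tmul xs zs)"
  by (induction xs) (auto simp: tmul_Cons)

lemma mset_tmul_concat_right: "mset (tmul xs (concat yss)) = mset (concat (map (\<lambda>ys. tmul xs ys) yss))"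
  by (induction yss) (simp_all add: mset_tmul_append_right)

lemma teq2_tmul_append_right: "teq2 s1 s2 (tmul xs (ys @ zs)) (tmul xs ys @ tmul xs zs)"
  by (rule teq2_mset[OF mset_tmul_append_right])

lemma teq2_tmul_concat_right: "teq2 s1 s2 (tmul xs (concat yss)) (concat (map (\<lambda>ys. tmul xs ys) yss))"
  by (rule teq2_mset[OF mset_tmul_concat_right])

lemma tmul_assoc: "tmul (tmul xs ys) zs = tmul xs (tmul ys zs)"
  for xs :: "('a::ring_1 \<times> 'b::ring_1) list"
proof -
  have tmul_map: "tmul (map (\<lambda>(c, d). (a * c, b * d)) ys) zs = map (\<lambda>(c, d). (a * c, b * d)) (tmul ys zs)"
    for a :: 'a and b :: 'b and ys
    by (induction ys) (auto simp: tmul_Cons mult.assoc)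
  show ?thesis by (induction xs) (auto simp: tmul_Cons tmul_append_left tmul_map case_prod_beta)
qed

lemma tmul_scl_left: "kalg s1 \<Longrightarrow> tmul (scl s1 c xs) ys = scl s1 c (tmul xs ys)"
  by (induction xs) (auto simp: tmul_Cons kalg_mult_left)

lemma tmul_scl_right: "kalg s1 \<Longrightarrow> tmul xs (scl s1 c ys) = scl s1 c (tmul xs ys)"
  by (induction xs) (auto simp: tmul_Cons kalg_mult_right)

lemma teq2_concat_map_pairwise:
  assumes h: "teq2 s1 s2 xs ys"
    and f_add: "\<And>x x' c. f (x + x') c = f x c + f x' c" and f_scal: "\<And>k x c. f (s1 k x) c = s1 k (f x c)"
    and g_add: "\<And>y y' d. g (y + y') d = g y d + g y' d" and g_scal: "\<And>k y d. g (s2 k y) d = s2 k (g y d)"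
  shows "teq2 s1 s2 (concat (map (\<lambda>(a, b). map (\<lambda>(c, d). (f a c, g b d)) L) xs))
    (concat (map (\<lambda>(a, b). map (\<lambda>(c, d). (f a c, g b d)) L) ys))"
proof (rule teq2_concat_map_balanced[OF h])
  fix x x' y
  show "teq2 s1 s2 (map (\<lambda>(c, d). (f (x + x') c, g y d)) L)
      (map (\<lambda>(c, d). (f x c, g y d)) L @ map (\<lambda>(c, d). (f x' c, g y d)) L)"
    by (rule teq2_map_split) (auto simp: f_add teq2_add_left)
next
  fix x y y'
  show "teq2 s1 s2 (map (\<lambda>(c, d). (f x c, g (y + y') d)) L)
      (map (\<lambda>(c, d). (f x c, g y d)) L @ map (\<lambda>(c, d). (f x c, g y' d)) L)"
    by (rule teq2_map_split) (auto simp: g_add teq2_add_right)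
next
  fix k x y
  show "teq2 s1 s2 (map (\<lambda>(c, d). (f (s1 k x) c, g y d)) L) (scl s1 k (map (\<lambda>(c, d). (f x c, g y d)) L))"
    by (simp add: f_scal comp_def case_prod_unfold teq2_refl)
next
  fix k x y
  show "teq2 s1 s2 (map (\<lambda>(c, d). (f x c, g (s2 k y) d)) L) (scl s1 k (map (\<lambda>(c, d). (f x c, g y d)) L))"
    unfolding map_map by (rule teq2_map) (auto simp: g_scal teq2_scal_right_left)
qed

lemma teq2_tmul_left:
  fixes xs :: "('a::ring_1 \<times> 'b::ring_1) list"
  assumes a1: "kalg s1" and a2: "kalg s2" and h: "teq2 s1 s2 xs xs'"
  shows "teq2 s1 s2 (tmul xs ys) (tmul xs' ys)"
proof -
  have "\<And>zs. tmul zs ys = concat (map (\<lambda>(a, b). map (\<lambda>(c, d). (a * c, b * d)) ys) zs)"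
    by (induct_tac zs) (auto simp: tmul_Cons case_prod_beta)
  moreover have "teq2 s1 s2 (concat (map (\<lambda>(a, b). map (\<lambda>(c, d). (a * c, b * d)) ys) xs))
      (concat (map (\<lambda>(a, b). map (\<lambda>(c, d). (a * c, b * d)) ys) xs'))"
    by (rule teq2_concat_map_pairwise[where f = "(*)" and g = "(*)", OF h])
       (simp_all add: distrib_right kalg_mult_left[OF a1] kalg_mult_left[OF a2])
  ultimately show ?thesis by simp
qed

lemma teq2_tmul_right:
  fixes xs :: "('a::ring_1 \<times> 'b::ring_1) list"
  assumes a1: "kalg s1" and a2: "kalg s2" and h: "teq2 s1 s2 ys ys'"
  shows "teq2 s1 s2 (tmul xs ys) (tmul xs ys')"
proof -
  let ?\<Phi> = "\<lambda>zs :: ('a \<times> 'b) list. concat (map (\<lambda>(a, b). map (\<lambda>(c, d). (c * a, d * b)) xs) zs)"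
  have "teq2 s1 s2 (tmul xs zs) (?\<Phi> zs)" for zs
  proof (rule teq2_mset)
    have "zs = concat (map (\<lambda>p. [p]) zs)" by (induction zs) auto
    then have "mset (tmul xs zs) = mset (concat (map (\<lambda>p. tmul xs [p]) zs))"
      using mset_tmul_concat_right[of xs "map (\<lambda>p. [p]) zs"] by (simp add: comp_def)
    moreover have "tmul xs [p] = map (\<lambda>q. (fst q * fst p, snd q * snd p)) xs" for p
      using tmul_single_right[of xs "fst p" "snd p"] by (simp add: case_prod_unfold)
    ultimately show "mset (tmul xs zs) = mset (?\<Phi> zs)" by (simp add: case_prod_unfold)
  qed
  moreover have "teq2 s1 s2 (?\<Phi> ys) (?\<Phi> ys')"
    by (rule teq2_concat_map_pairwise[where f = "\<lambda>x c. c * x" and g = "\<lambda>y d. d * y", OF h])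
       (simp_all add: distrib_left kalg_mult_right[OF a1] kalg_mult_right[OF a2])
  ultimately show ?thesis by (meson teq2_sym teq2_trans)
qed

lemma teq2_tmul:
  fixes xs :: "('a::ring_1 \<times> 'b::ring_1) list"
  shows "kalg s1 \<Longrightarrow> kalg s2 \<Longrightarrow> teq2 s1 s2 xs xs' \<Longrightarrow> teq2 s1 s2 ys ys' \<Longrightarrow>
    teq2 s1 s2 (tmul xs ys) (tmul xs' ys')"
  using teq2_tmul_left teq2_tmul_right teq2_trans by blast

lemma sum_list_concat_map: "sum_list (map f (concat xss)) = sum_list (map (\<lambda>xs. sum_list (map f xs)) xss)"
  by (induction xss) auto

lemma dl_sum: "sum_list (map (\<lambda>(x, y, z). f x y z) (dl D xs))
   = sum_list (map (\<lambda>(a, b). sum_list (map (\<lambda>(a1, a2). f a1 a2 b) (D a))) xs)"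
  unfolding dl_def sum_list_concat_map by (simp add: comp_def case_prod_unfold)

lemma dr_sum: "sum_list (map (\<lambda>(x, y, z). f x y z) (dr D xs))
   = sum_list (map (\<lambda>(a, b). sum_list (map (\<lambda>(b1, b2). f a b1 b2) (D b))) xs)"
  unfolding dr_def sum_list_concat_map by (simp add: comp_def case_prod_unfold)

lemma dl_concat: "concat (map (\<lambda>(x, y, z). f x y z) (dl D xs))
   = concat (map (\<lambda>(a, b). concat (map (\<lambda>(a1, a2). f a1 a2 b) (D a))) xs)"
  unfolding dl_def by (induction xs) (auto simp: map_concat comp_def case_prod_unfold)

lemma dr_concat: "concat (map (\<lambda>(x, y, z). f x y z) (dr D xs))
   = concat (map (\<lambda>(a, b). concat (map (\<lambda>(b1, b2). f a b1 b2) (D b))) xs)"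
  unfolding dr_def by (induction xs) (auto simp: map_concat comp_def case_prod_unfold)

lemma tmul_sum: "sum_list (map (\<lambda>(a, b). f a b) (tmul xs ys))
   = sum_list (map (\<lambda>(a, b). sum_list (map (\<lambda>(c, d). f (a * c) (b * d)) ys)) xs)"
  by (induction xs) (auto simp: tmul_Cons comp_def case_prod_unfold)

lemma sum_list_swap: "sum_list (map (\<lambda>x. sum_list (map (\<lambda>y. f x y) ys)) xs)
   = sum_list (map (\<lambda>y. sum_list (map (\<lambda>x. f x y) xs)) ys)"
  for f :: "_ \<Rightarrow> _ \<Rightarrow> 'z::ab_group_add"
  by (induction xs) (auto simp: sum_list_addf)

section \<open>Hopf algebras, comodule algebras and Sweedler sums\<close>

locale hopf_comodule_alg =
  fixes sH :: "'k::comm_ring_1 \<Rightarrow> 'h::ring_1 \<Rightarrow> 'h" and Delta :: "'h \<Rightarrow> ('h \<times> 'h) list"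
    and eps :: "'h \<Rightarrow> 'k" and S :: "'h \<Rightarrow> 'h"
    and sA :: "'k \<Rightarrow> 'a::ring_1 \<Rightarrow> 'a" and rho :: "'a \<Rightarrow> ('a \<times> 'h) list"
  assumes hopf: "hopf_alg sH Delta eps S" and comod: "comod_alg sH Delta eps sA rho"
begin

lemma kalgH: "kalg sH" using hopf by (simp add: hopf_alg_def)
lemma kmodH: "kmod sH" using kalgH by (rule kalg_kmod)
lemma kalgA: "kalg sA" using comod by (simp add: comod_alg_def)
lemma kmodA: "kmod sA" using kalgA by (rule kalg_kmod)
lemma Delta_add: "teq2 sH sH (Delta (x + y)) (Delta x @ Delta y)" using hopf by (simp add: hopf_alg_def)
lemma Delta_scal: "teq2 sH sH (Delta (sH c x)) (scl sH c (Delta x))" using hopf by (simp add: hopf_alg_def)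
lemma Delta_coassoc: "teq3 sH sH sH (dl Delta (Delta h)) (dr Delta (Delta h))" using hopf by (simp add: hopf_alg_def)
lemma Delta_mult: "teq2 sH sH (Delta (x * y)) (tmul (Delta x) (Delta y))" using hopf by (simp add: hopf_alg_def)
lemma Delta_one: "teq2 sH sH (Delta 1) [(1, 1)]" using hopf by (simp add: hopf_alg_def)
lemma counit_left: "sum_list (map (\<lambda>(a, b). sH (eps a) b) (Delta h)) = h" using hopf by (simp add: hopf_alg_def)
lemma counit_right: "sum_list (map (\<lambda>(a, b). sH (eps b) a) (Delta h)) = h" using hopf by (simp add: hopf_alg_def)
lemma eps_mult: "eps (x * y) = eps x * eps y" using hopf by (simp add: hopf_alg_def)
lemma eps_one: "eps 1 = 1" using hopf by (simp add: hopf_alg_def)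
lemma S_klin: "klin sH sH S" using hopf by (simp add: hopf_alg_def)
lemma antipode_left: "sum_list (map (\<lambda>(a, b). S a * b) (Delta h)) = sH (eps h) 1"
  using hopf by (simp add: hopf_alg_def)
lemma antipode_right: "sum_list (map (\<lambda>(a, b). a * S b) (Delta h)) = sH (eps h) 1"
  using hopf by (simp add: hopf_alg_def)
lemma rho_add: "teq2 sA sH (rho (x + y)) (rho x @ rho y)" using comod by (simp add: comod_alg_def)
lemma rho_scal: "teq2 sA sH (rho (sA c x)) (scl sA c (rho x))" using comod by (simp add: comod_alg_def)
lemma rho_mult: "teq2 sA sH (rho (x * y)) (tmul (rho x) (rho y))" using comod by (simp add: comod_alg_def)
lemma rho_one: "teq2 sA sH (rho 1) [(1, 1)]" using comod by (simp add: comod_alg_def)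

definition sweedler :: "'h \<Rightarrow> ('h \<Rightarrow> 'h \<Rightarrow> 'z::ab_group_add) \<Rightarrow> 'z" where
  "sweedler h f = sum_list (map (\<lambda>(a, b). f a b) (Delta h))"

lemma conv_sweedler: "conv Delta f g h = sweedler h (\<lambda>a b. f a * g b)"
  by (simp add: conv_def sweedler_def)

lemma sweedler_mult_right: "sweedler h f * c = sweedler h (\<lambda>a b. f a b * c)"
  for c :: "'r::ring_1" unfolding sweedler_def by (simp add: sum_list_mult_const[symmetric] case_prod_unfold)

lemma sweedler_mult_left: "c * sweedler h f = sweedler h (\<lambda>a b. c * f a b)"
  for c :: "'r::ring_1" unfolding sweedler_def by (simp add: sum_list_const_mult[symmetric] case_prod_unfold)

lemma sweedler_swap:
  "sweedler h (\<lambda>a b. sweedler k (\<lambda>c d. f a b c d)) = sweedler k (\<lambda>c d. sweedler h (\<lambda>a b. f a b c d))"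
  unfolding sweedler_def case_prod_unfold by (rule sum_list_swap)

lemma sweedler_klin: "klin s1 s2 F \<Longrightarrow> F (sweedler h f) = sweedler h (\<lambda>a b. F (f a b))"
  unfolding sweedler_def by (simp add: klin_sum_list case_prod_unfold)

lemma sweedler_kmod: "kmod s \<Longrightarrow> s c (sweedler h f) = sweedler h (\<lambda>a b. s c (f a b))"
  unfolding sweedler_def by (simp add: kmod_sum_list case_prod_unfold)

text \<open>The Hopf algebra axioms hold only up to equality of tensors, so they can be used
  inside Sweedler sums of bilinear (resp. trilinear) expressions only.\<close>

lemma sweedler_add:
  assumes km: "kmod sZ" and l1: "\<And>b. klin sH sZ (\<lambda>a. f a b)" and l2: "\<And>a. klin sH sZ (f a)"
  shows "sweedler (x + y) f = sweedler x f + sweedler y f"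
  using teq2_sum_list_eq[OF km Delta_add l1 l2] by (simp add: sweedler_def)

lemma sweedler_scal:
  assumes km: "kmod sZ" and l1: "\<And>b. klin sH sZ (\<lambda>a. f a b)" and l2: "\<And>a. klin sH sZ (f a)"
  shows "sweedler (sH c x) f = sZ c (sweedler x f)"
  using teq2_sum_list_eq[OF km Delta_scal l1 l2]
  by (simp add: sweedler_def comp_def case_prod_unfold klin_scal[OF l1] kmod_sum_list[OF km])

lemma klin_sweedler:
  assumes km: "kmod sZ" and l1: "\<And>b. klin sH sZ (\<lambda>a. f a b)" and l2: "\<And>a. klin sH sZ (f a)"
  shows "klin sH sZ (\<lambda>x. sweedler x f)"
  unfolding klin_def using sweedler_add[OF km l1 l2] sweedler_scal[OF km l1 l2] by auto

lemma klin_sweedler_fun: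
  assumes km: "kmod sZ" and l: "\<And>a b. klin s sZ (\<lambda>x. g a b x)"
  shows "klin s sZ (\<lambda>x. sweedler h (\<lambda>a b. g a b x))"
  unfolding sweedler_def using klin_sum_list_fun[OF km, of "Delta h" s "\<lambda>p x. case p of (a, b) \<Rightarrow> g a b x"] l
  by (auto simp: case_prod_unfold)

lemma sweedler_coassoc:
  assumes km: "kmod sZ"
    and l1: "\<And>y z. klin sH sZ (\<lambda>x. f x y z)" and l2: "\<And>x z. klin sH sZ (\<lambda>y. f x y z)"
    and l3: "\<And>x y. klin sH sZ (f x y)"
  shows "sweedler h (\<lambda>a b. sweedler a (\<lambda>a1 a2. f a1 a2 b)) = sweedler h (\<lambda>a b. sweedler b (\<lambda>b1 b2. f a b1 b2))"
  using teq3_sum_list_eq[OF km Delta_coassoc l1 l2 l3] unfolding dl_sum dr_sum sweedler_def .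

lemma sweedler_mult:
  assumes km: "kmod sZ" and l1: "\<And>b. klin sH sZ (\<lambda>a. f a b)" and l2: "\<And>a. klin sH sZ (f a)"
  shows "sweedler (x * y) f = sweedler x (\<lambda>a b. sweedler y (\<lambda>c d. f (a * c) (b * d)))"
  using teq2_sum_list_eq[OF km Delta_mult l1 l2] unfolding sweedler_def tmul_sum .

lemma sweedler_one:
  assumes km: "kmod sZ" and l1: "\<And>b. klin sH sZ (\<lambda>a. f a b)" and l2: "\<And>a. klin sH sZ (f a)"
  shows "sweedler 1 f = f 1 1"
  using teq2_sum_list_eq[OF km Delta_one l1 l2] unfolding sweedler_def by simp

lemma sweedler_cocomm:
  assumes cc: "cocommutative sH Delta"
    and km: "kmod sZ" and l1: "\<And>b. klin sH sZ (\<lambda>a. f a b)" and l2: "\<And>a. klin sH sZ (f a)"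
  shows "sweedler h f = sweedler h (\<lambda>a b. f b a)"
proof -
  have "teq2 sH sH (Delta h) (flip (Delta h))" using cc by (simp add: cocommutative_def)
  from teq2_sum_list_eq[OF km this l1 l2] show ?thesis
    unfolding sweedler_def flip_def by (simp add: comp_def case_prod_unfold)
qed

lemma sweedler_counit_left:
  assumes g: "klin sH sZ g"
  shows "sweedler h (\<lambda>a b. sZ (eps a) (g b)) = g h"
proof -
  have "g h = g (sum_list (map (\<lambda>(a, b). sH (eps a) b) (Delta h)))" by (simp add: counit_left)
  also have "\<dots> = sweedler h (\<lambda>a b. sZ (eps a) (g b))"
    unfolding sweedler_def klin_sum_list[OF g] by (simp add: case_prod_unfold klin_scal[OF g])
  finally show ?thesis by simp
qed

lemma sweedler_counit_right:
  assumes g: "klin sH sZ g"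
  shows "sweedler h (\<lambda>a b. sZ (eps b) (g a)) = g h"
proof -
  have "g h = g (sum_list (map (\<lambda>(a, b). sH (eps b) a) (Delta h)))" by (simp add: counit_right)
  also have "\<dots> = sweedler h (\<lambda>a b. sZ (eps b) (g a))"
    unfolding sweedler_def klin_sum_list[OF g] by (simp add: case_prod_unfold klin_scal[OF g])
  finally show ?thesis by simp
qed

lemma klin_conv:
  assumes ks: "kalg s" and f: "klin sH s f" and g: "klin sH s g"
  shows "klin sH s (conv Delta f g)"
  unfolding conv_sweedler[abs_def]
  by (rule klin_sweedler[OF kalg_kmod[OF ks]]) (intro klin_mult_right[OF ks] klin_mult_left[OF ks] f g)+

lemma conv_assoc:
  assumes ks: "kalg s" and f: "klin sH s f" and g: "klin sH s g" and k: "klin sH s k"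
  shows "conv Delta (conv Delta f g) k = conv Delta f (conv Delta g k)"
proof
  fix h
  have "conv Delta (conv Delta f g) k h = sweedler h (\<lambda>a b. sweedler a (\<lambda>a1 a2. f a1 * g a2 * k b))"
    by (simp add: conv_sweedler sweedler_mult_right)
  also have "\<dots> = sweedler h (\<lambda>a b. sweedler b (\<lambda>b1 b2. f a * g b1 * k b2))"
    by (rule sweedler_coassoc[OF kalg_kmod[OF ks]]) (intro klin_mult_right[OF ks] klin_mult_left[OF ks] f g k)+
  also have "\<dots> = conv Delta f (conv Delta g k) h"
    by (simp add: conv_sweedler sweedler_mult_left mult.assoc)
  finally show "conv Delta (conv Delta f g) k h = conv Delta f (conv Delta g k) h" .
qed

lemma conv_cunit_right: "kalg s \<Longrightarrow> klin sH s f \<Longrightarrow> conv Delta f (cunit s eps) = f"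
  by (rule ext) (simp add: conv_sweedler cunit_def kalg_mult_right sweedler_counit_right)

lemma conv_cunit_left: "kalg s \<Longrightarrow> klin sH s f \<Longrightarrow> conv Delta (cunit s eps) f = f"
  by (rule ext) (simp add: conv_sweedler cunit_def kalg_mult_left sweedler_counit_left)

lemmas conv_assoc_A = conv_assoc[OF kalgA]
lemmas klin_conv_A = klin_conv[OF kalgA]
lemmas conv_cunit_right_A = conv_cunit_right[OF kalgA]
lemmas conv_cunit_left_A = conv_cunit_left[OF kalgA]

lemma conv_mult_const_right: "conv Delta f (\<lambda>x. g x * c) h = conv Delta f g h * c"
  by (simp add: conv_sweedler sweedler_mult_right mult.assoc)

lemma conv_mult_const_left: "conv Delta (\<lambda>x. c * f x) g h = c * conv Delta f g h"
  by (simp add: conv_sweedler sweedler_mult_left mult.assoc)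

lemmas klin_H_intros = klin_mult_right[OF kalgH] klin_mult_left[OF kalgH] S_klin klin_id
  klin_sweedler_fun[OF kmodH] klin_comp[OF S_klin]

lemma S_one: "S 1 = 1"
proof -
  have "sweedler 1 (\<lambda>a b. S a * b) = S 1 * 1"
    by (rule sweedler_one[OF kmodH]) (intro klin_H_intros)+
  moreover have "sweedler 1 (\<lambda>a b. S a * b) = 1"
    using antipode_left[of 1] by (simp add: sweedler_def eps_one kmod_one[OF kmodH])
  ultimately show ?thesis by simp
qed

lemma antipode_left_mult:
  "sweedler a (\<lambda>a1 a2. sweedler c (\<lambda>c1 c2. S (a1 * c1) * (a2 * c2))) = sH (eps a * eps c) 1"
proof -
  have "sweedler (a * c) (\<lambda>p q. S p * q) = sweedler a (\<lambda>a1 a2. sweedler c (\<lambda>c1 c2. S (a1 * c1) * (a2 * c2)))"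
    by (rule sweedler_mult[OF kmodH]) (intro klin_H_intros)+
  moreover have "sweedler (a * c) (\<lambda>p q. S p * q) = sH (eps (a * c)) 1"
    using antipode_left by (simp add: sweedler_def)
  ultimately show ?thesis by (simp add: eps_mult)
qed

lemma antipode_right_nested:
  "sweedler b (\<lambda>b1 b2. sweedler d (\<lambda>d1 d2. b1 * d1 * S d2 * S b2)) = sH (eps b * eps d) 1"
proof -
  have antipode: "\<And>h. sweedler h (\<lambda>h1 h2. h1 * S h2) = sH (eps h) 1"
    using antipode_right by (simp add: sweedler_def)
  have "\<And>b1 b2. sweedler d (\<lambda>d1 d2. b1 * d1 * S d2 * S b2) = b1 * sweedler d (\<lambda>d1 d2. d1 * S d2) * S b2"
    by (simp add: sweedler_mult_left sweedler_mult_right mult.assoc)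
  then have "sweedler b (\<lambda>b1 b2. sweedler d (\<lambda>d1 d2. b1 * d1 * S d2 * S b2))
      = sweedler b (\<lambda>b1 b2. sH (eps d) (b1 * S b2))"
    by (simp add: antipode kalg_mult_left[OF kalgH] kalg_mult_right[OF kalgH])
  also have "\<dots> = sH (eps d) (sweedler b (\<lambda>b1 b2. b1 * S b2))"
    by (simp add: sweedler_kmod[OF kmodH])
  finally show ?thesis by (simp add: antipode kmod_comp[OF kmodH] mult.commute)
qed

text \<open>The standard computation S(xy) = S(x1 y1) x2 y2 S(y3) S(x3) = S(y) S(x): insert
  x2 y2 S(y3) S(x3) by the counit and the antipode, then contract S(x1 y1) x2 y2 instead.\<close>

lemma S_mult: "S (x * y) = S y * S x"
proof -
  have "S (x * y) = sweedler x (\<lambda>a b. sH (eps b) (sweedler y (\<lambda>c d. sH (eps d) (S (a * c)))))"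
  proof -
    have "\<And>a. sweedler y (\<lambda>c d. sH (eps d) (S (a * c))) = S (a * y)"
      by (rule sweedler_counit_right[where g = "\<lambda>c. S (_ * c)"]) (intro klin_H_intros)+
    moreover have "sweedler x (\<lambda>a b. sH (eps b) (S (a * y))) = S (x * y)"
      by (rule sweedler_counit_right[where g = "\<lambda>a. S (a * y)"]) (intro klin_H_intros)+
    ultimately show ?thesis by simp
  qed
  also have "\<dots> = sweedler x (\<lambda>a b. sweedler y (\<lambda>c d.
      S (a * c) * sweedler b (\<lambda>b1 b2. sweedler d (\<lambda>d1 d2. b1 * d1 * S d2 * S b2))))"
    by (simp add: antipode_right_nested sweedler_kmod[OF kmodH] kalg_mult_right[OF kalgH] kmod_comp[OF kmodH])
  also have "\<dots> = sweedler x (\<lambda>a b. sweedler b (\<lambda>b1 b2. sweedler y (\<lambda>c d.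
      sweedler d (\<lambda>d1 d2. S (a * c) * b1 * d1 * S d2 * S b2))))"
    by (simp add: sweedler_mult_left mult.assoc, intro arg_cong[where f = "sweedler x"] ext sweedler_swap)
  also have "\<dots> = sweedler x (\<lambda>a b. sweedler a (\<lambda>a1 a2. sweedler y (\<lambda>c d.
      sweedler d (\<lambda>d1 d2. S (a1 * c) * a2 * d1 * S d2 * S b))))"
    by (rule sweedler_coassoc[OF kmodH, symmetric]) (intro klin_H_intros)+
  also have "\<dots> = sweedler x (\<lambda>a b. sweedler a (\<lambda>a1 a2. sweedler y (\<lambda>c d.
      sweedler c (\<lambda>c1 c2. S (a1 * c1) * a2 * c2 * S d * S b))))"
  proof -
    have "sweedler y (\<lambda>c d. sweedler d (\<lambda>d1 d2. S (a1 * c) * a2 * d1 * S d2 * S b))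
        = sweedler y (\<lambda>c d. sweedler c (\<lambda>c1 c2. S (a1 * c1) * a2 * c2 * S d * S b))" for a1 a2 b
      by (rule sweedler_coassoc[OF kmodH, symmetric]) (intro klin_H_intros)+
    then show ?thesis by simp
  qed
  also have "\<dots> = sweedler x (\<lambda>a b. sweedler y (\<lambda>c d.
      sweedler a (\<lambda>a1 a2. sweedler c (\<lambda>c1 c2. S (a1 * c1) * (a2 * c2))) * S d * S b))"
    by (intro arg_cong[where f = "sweedler x"] ext, subst sweedler_swap)
       (simp add: sweedler_mult_right mult.assoc)
  also have "\<dots> = sweedler x (\<lambda>a b. sweedler y (\<lambda>c d. sH (eps a) (sH (eps c) (S d * S b))))"
    by (simp add: antipode_left_mult kalg_mult_left[OF kalgH] kmod_comp[OF kmodH])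
  also have "\<dots> = sweedler x (\<lambda>a b. sH (eps a) (S y * S b))"
  proof -
    have "\<And>b. sweedler y (\<lambda>c d. sH (eps c) (S d * S b)) = S y * S b"
      by (rule sweedler_counit_left[where g = "\<lambda>d. S d * S _"]) (intro klin_H_intros)+
    then show ?thesis by (simp add: sweedler_kmod[OF kmodH, symmetric])
  qed
  also have "\<dots> = S y * S x"
    by (rule sweedler_counit_left[where g = "\<lambda>b. S y * S b"]) (intro klin_H_intros)+
  finally show ?thesis .
qed

lemma OmegaA_colinear: "t \<in> OmegaA sH sA Delta rho \<Longrightarrow> colinear sH sA Delta rho t"
  by (simp add: OmegaA_def)
lemma OmegaA_klin: "t \<in> OmegaA sH sA Delta rho \<Longrightarrow> klin sH sA t"
  by (simp add: OmegaA_def colinear_def)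
lemma OmegaA_mult: "t \<in> OmegaA sH sA Delta rho \<Longrightarrow> t (x * y) = t x * t y"
  by (simp add: OmegaA_def)
lemma OmegaA_one: "t \<in> OmegaA sH sA Delta rho \<Longrightarrow> t 1 = 1"
  by (simp add: OmegaA_def)
lemma OmegaA_klin_antipode: "t \<in> OmegaA sH sA Delta rho \<Longrightarrow> klin sH sA (\<lambda>x. t (S x))"
  by (rule klin_comp[OF OmegaA_klin S_klin])

lemma OmegaA_conv_antipode:
  assumes t: "t \<in> OmegaA sH sA Delta rho"
  shows "conv Delta t (\<lambda>x. t (S x)) = cunit sA eps" and "conv Delta (\<lambda>x. t (S x)) t = cunit sA eps"
proof -
  have conv_t: "conv Delta f g h = t (sweedler h (\<lambda>a b. f' a * g' b))"
    if "\<And>x. f x = t (f' x)" "\<And>x. g x = t (g' x)" for f g f' g' h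
    by (simp add: that conv_sweedler sweedler_klin[OF OmegaA_klin[OF t]] OmegaA_mult[OF t])
  have unit: "t (sH (eps h) 1) = cunit sA eps h" for h
    by (simp add: cunit_def klin_scal[OF OmegaA_klin[OF t]] OmegaA_one[OF t])
  show "conv Delta t (\<lambda>x. t (S x)) = cunit sA eps"
    using conv_t[of t "\<lambda>x. x" "\<lambda>x. t (S x)" S] antipode_right unit by (auto simp: sweedler_def)
  show "conv Delta (\<lambda>x. t (S x)) t = cunit sA eps"
    using conv_t[of "\<lambda>x. t (S x)" S t "\<lambda>x. x"] antipode_left unit by (auto simp: sweedler_def)
qed

section \<open>Maps into A \<otimes> H and their convolution\<close>

abbreviation teqA where "teqA \<equiv> teq2 sA sH"

definition tensor_klin :: "('k \<Rightarrow> 'x::ab_group_add \<Rightarrow> 'x) \<Rightarrow> ('x \<Rightarrow> ('a \<times> 'h) list) \<Rightarrow> bool" where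
  "tensor_klin s F \<longleftrightarrow> (\<forall>x y. teqA (F (x + y)) (F x @ F y)) \<and> (\<forall>c x. teqA (F (s c x)) (scl sA c (F x)))"

lemma tensor_klin_add: "tensor_klin s F \<Longrightarrow> teqA (F (x + y)) (F x @ F y)"
  by (simp add: tensor_klin_def)

lemma tensor_klin_scal: "tensor_klin s F \<Longrightarrow> teqA (F (s c x)) (scl sA c (F x))"
  by (simp add: tensor_klin_def)

lemma tensor_klin_zero: "tensor_klin s F \<Longrightarrow> teqA (F 0) []"
proof -
  assume "tensor_klin s F"
  then have "teqA (F 0 @ F 0) (F 0 @ [])" using tensor_klin_add[of s F 0 0] teq2_sym by simp
  then show ?thesis by (rule teq2_append_cancel)
qed

lemma tensor_klin_sum_list:
  "tensor_klin s F \<Longrightarrow> teqA (F (sum_list (map g L))) (concat (map (\<lambda>l. F (g l)) L))"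
proof (induction L)
  case Nil then show ?case using tensor_klin_zero by simp
next
  case (Cons a L)
  have "teqA (F (g a + sum_list (map g L))) (F (g a) @ F (sum_list (map g L)))"
    by (rule tensor_klin_add[OF Cons.prems])
  also have "teqA \<dots> (F (g a) @ concat (map (\<lambda>l. F (g l)) L))"
    by (rule teq2_append[OF teq2_refl Cons.IH[OF Cons.prems]])
  finally show ?case by simp
qed

lemma tensor_klin_rho: "tensor_klin sA rho"
  unfolding tensor_klin_def by (simp add: rho_add rho_scal)

lemma tensor_klin_rho_comp: "klin sH sA u \<Longrightarrow> tensor_klin sH (\<lambda>x. rho (u x))"
  unfolding tensor_klin_def by (simp add: klin_add klin_scal rho_add rho_scal)

lemma teq2_map_balanced:
  assumes h: "teq2 sH sH L M"
    and "\<And>x x' y. teqA [\<psi> (x + x') y] [\<psi> x y, \<psi> x' y]"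
    and "\<And>x y y'. teqA [\<psi> x (y + y')] [\<psi> x y, \<psi> x y']"
    and "\<And>c x y. teqA [\<psi> (sH c x) y] (scl sA c [\<psi> x y])"
    and "\<And>c x y. teqA [\<psi> x (sH c y)] (scl sA c [\<psi> x y])"
  shows "teqA (map (\<lambda>(a, b). \<psi> a b) L) (map (\<lambda>(a, b). \<psi> a b) M)"
  using teq2_concat_map_balanced[where \<Phi> = "\<lambda>a b. [\<psi> a b]", OF h] assms(2-5)
  by (simp add: case_prod_unfold map_concat[symmetric])

text \<open>The map h \<mapsto> a q(h2) \<otimes> y S(h1); with a = y = 1 and q = u it is the candidate
  for \<rho> \<circ> u below.\<close>

lemma tensor_klin_twist:
  assumes q: "klin sH sA q"
  shows "tensor_klin sH (\<lambda>h. map (\<lambda>(h1, h2). (a * q h2, y * S h1)) (Delta h))"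
proof -
  let ?\<psi> = "\<lambda>h1 h2. (a * q h2, y * S h1)"
  have balanced:
    "teqA [?\<psi> (b1 + b1') b2] [?\<psi> b1 b2, ?\<psi> b1' b2]" "teqA [?\<psi> b1 (b2 + b2')] [?\<psi> b1 b2, ?\<psi> b1 b2']"
    "teqA [?\<psi> (sH c b1) b2] (scl sA c [?\<psi> b1 b2])" "teqA [?\<psi> b1 (sH c b2)] (scl sA c [?\<psi> b1 b2])"
    for b1 b1' b2 b2' c
    by (simp_all add: klin_add[OF S_klin] klin_add[OF q] klin_scal[OF S_klin] klin_scal[OF q]
        distrib_left kalg_mult_right[OF kalgH] kalg_mult_right[OF kalgA]
        teq2_add_left teq2_add_right teq2_scal_right_left teq2_refl)
  show ?thesis
    unfolding tensor_klin_def
  proof (intro conjI allI)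
    fix x1 x2
    show "teqA (map (\<lambda>(h1, h2). ?\<psi> h1 h2) (Delta (x1 + x2)))
        (map (\<lambda>(h1, h2). ?\<psi> h1 h2) (Delta x1) @ map (\<lambda>(h1, h2). ?\<psi> h1 h2) (Delta x2))"
      using teq2_map_balanced[OF Delta_add balanced] by simp
  next
    fix c x
    have "teqA (map (\<lambda>(h1, h2). ?\<psi> h1 h2) (Delta (sH c x))) (map (\<lambda>(h1, h2). ?\<psi> h1 h2) (scl sH c (Delta x)))"
      by (rule teq2_map_balanced[OF Delta_scal balanced])
    also have "teqA \<dots> (scl sA c (map (\<lambda>(h1, h2). ?\<psi> h1 h2) (Delta x)))"
      unfolding map_map by (rule teq2_map) (auto intro: balanced(3)[simplified])
    finally show "teqA (map (\<lambda>(h1, h2). ?\<psi> h1 h2) (Delta (sH c x))) (scl sA c (map (\<lambda>(h1, h2). ?\<psi> h1 h2) (Delta x)))" .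
  qed
qed

definition tconv :: "('h \<Rightarrow> ('a \<times> 'h) list) \<Rightarrow> ('h \<Rightarrow> ('a \<times> 'h) list) \<Rightarrow> 'h \<Rightarrow> ('a \<times> 'h) list" where
  "tconv F G h = concat (map (\<lambda>(a, b). tmul (F a) (G b)) (Delta h))"

definition tunit :: "'h \<Rightarrow> ('a \<times> 'h) list" where
  "tunit h = [(sA (eps h) 1, 1)]"

lemma teq2_tconv:
  "(\<And>x. teqA (F x) (F' x)) \<Longrightarrow> (\<And>x. teqA (G x) (G' x)) \<Longrightarrow> teqA (tconv F G h) (tconv F' G' h)"
  unfolding tconv_def by (rule teq2_concat) (auto intro: teq2_tmul[OF kalgA kalgH])

lemma teq2_tmul3_coassoc:
  assumes F: "tensor_klin sH F" and G: "tensor_klin sH G" and K: "tensor_klin sH K"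
  shows "teqA (concat (map (\<lambda>(x, y, z). tmul (tmul (F x) (G y)) (K z)) (dl Delta (Delta h))))
    (concat (map (\<lambda>(x, y, z). tmul (tmul (F x) (G y)) (K z)) (dr Delta (Delta h))))"
proof -
  let ?\<Phi> = "\<lambda>x y z. tmul (tmul (F x) (G y)) (K z)"
  show ?thesis
  proof (rule teq3_concat_map_balanced[OF Delta_coassoc])
    fix x x' y z
    have "teqA (?\<Phi> (x + x') y z) (tmul (tmul (F x @ F x') (G y)) (K z))"
      by (intro teq2_tmul[OF kalgA kalgH] tensor_klin_add[OF F] teq2_refl)
    then show "teqA (?\<Phi> (x + x') y z) (?\<Phi> x y z @ ?\<Phi> x' y z)" by (simp add: tmul_append_left)
  next
    fix x y y' z
    have "teqA (?\<Phi> x (y + y') z) (tmul (tmul (F x) (G y @ G y')) (K z))"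
      by (intro teq2_tmul[OF kalgA kalgH] tensor_klin_add[OF G] teq2_refl)
    also have "teqA \<dots> (tmul (tmul (F x) (G y) @ tmul (F x) (G y')) (K z))"
      by (intro teq2_tmul[OF kalgA kalgH] teq2_tmul_append_right teq2_refl)
    finally show "teqA (?\<Phi> x (y + y') z) (?\<Phi> x y z @ ?\<Phi> x y' z)" by (simp add: tmul_append_left)
  next
    fix x y z z'
    have "teqA (?\<Phi> x y (z + z')) (tmul (tmul (F x) (G y)) (K z @ K z'))"
      by (intro teq2_tmul[OF kalgA kalgH] tensor_klin_add[OF K] teq2_refl)
    then show "teqA (?\<Phi> x y (z + z')) (?\<Phi> x y z @ ?\<Phi> x y z')"
      using teq2_tmul_append_right teq2_trans by blast
  next
    fix c x y z
    have "teqA (?\<Phi> (sH c x) y z) (tmul (tmul (scl sA c (F x)) (G y)) (K z))"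
      by (intro teq2_tmul[OF kalgA kalgH] tensor_klin_scal[OF F] teq2_refl)
    then show "teqA (?\<Phi> (sH c x) y z) (scl sA c (?\<Phi> x y z))" by (simp add: tmul_scl_left[OF kalgA])
  next
    fix c x y z
    have "teqA (?\<Phi> x (sH c y) z) (tmul (tmul (F x) (scl sA c (G y))) (K z))"
      by (intro teq2_tmul[OF kalgA kalgH] tensor_klin_scal[OF G] teq2_refl)
    then show "teqA (?\<Phi> x (sH c y) z) (scl sA c (?\<Phi> x y z))"
      by (simp add: tmul_scl_left[OF kalgA] tmul_scl_right[OF kalgA])
  next
    fix c x y z
    have "teqA (?\<Phi> x y (sH c z)) (tmul (tmul (F x) (G y)) (scl sA c (K z)))"
      by (intro teq2_tmul[OF kalgA kalgH] tensor_klin_scal[OF K] teq2_refl)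
    then show "teqA (?\<Phi> x y (sH c z)) (scl sA c (?\<Phi> x y z))" by (simp add: tmul_scl_right[OF kalgA])
  qed
qed

lemma tconv_assoc:
  assumes F: "tensor_klin sH F" and G: "tensor_klin sH G" and K: "tensor_klin sH K"
  shows "teqA (tconv (tconv F G) K h) (tconv F (tconv G K) h)"
proof -
  have "tconv (tconv F G) K h = concat (map (\<lambda>(x, y, z). tmul (tmul (F x) (G y)) (K z)) (dl Delta (Delta h)))"
    unfolding dl_concat tconv_def by (simp add: tmul_concat_left comp_def case_prod_unfold)
  also have "teqA \<dots> (concat (map (\<lambda>(x, y, z). tmul (tmul (F x) (G y)) (K z)) (dr Delta (Delta h))))"
    by (rule teq2_tmul3_coassoc[OF F G K])
  also have "teqA \<dots> (tconv F (tconv G K) h)"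
    unfolding dr_concat tconv_def
  proof (rule teq2_concat, clarify)
    fix a b
    show "teqA (concat (map (\<lambda>(b1, b2). tmul (tmul (F a) (G b1)) (K b2)) (Delta b)))
        (tmul (F a) (concat (map (\<lambda>(b1, b2). tmul (G b1) (K b2)) (Delta b))))"
      using teq2_sym[OF teq2_tmul_concat_right[of sA sH "F a" "map (\<lambda>(b1, b2). tmul (G b1) (K b2)) (Delta b)"]]
      by (simp add: tmul_assoc comp_def case_prod_unfold)
  qed
  finally show ?thesis .
qed

lemma tconv_tunit_right:
  assumes F: "tensor_klin sH F"
  shows "teqA (tconv F tunit h) (F h)"
proof -
  have "tmul L [(sA c 1, 1)] = scl sA c L" for L :: "('a \<times> 'h) list" and c
    by (induction L) (auto simp: tmul_Cons kalg_mult_right[OF kalgA])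
  then have "tconv F tunit h = concat (map (\<lambda>(a, b). scl sA (eps b) (F a)) (Delta h))"
    unfolding tconv_def tunit_def by simp
  also have "teqA \<dots> (concat (map (\<lambda>(a, b). F (sH (eps b) a)) (Delta h)))"
    by (rule teq2_concat) (auto intro: teq2_sym[OF tensor_klin_scal[OF F]])
  also have "teqA \<dots> (F (sum_list (map (\<lambda>(a, b). sH (eps b) a) (Delta h))))"
    using teq2_sym[OF tensor_klin_sum_list[OF F, of "\<lambda>(a, b). sH (eps b) a" "Delta h"]]
    by (simp add: case_prod_unfold)
  finally show ?thesis using counit_right by simp
qed

lemma tconv_tunit_left:
  assumes F: "tensor_klin sH F"
  shows "teqA (tconv tunit F h) (F h)"
proof -
  have "tmul [(sA c 1, 1)] L = scl sA c L" for L :: "('a \<times> 'h) list" and c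
    by (induction L) (auto simp: tmul_single_left kalg_mult_left[OF kalgA])
  then have "tconv tunit F h = concat (map (\<lambda>(a, b). scl sA (eps a) (F b)) (Delta h))"
    unfolding tconv_def tunit_def by simp
  also have "teqA \<dots> (concat (map (\<lambda>(a, b). F (sH (eps a) b)) (Delta h)))"
    by (rule teq2_concat) (auto intro: teq2_sym[OF tensor_klin_scal[OF F]])
  also have "teqA \<dots> (F (sum_list (map (\<lambda>(a, b). sH (eps a) b) (Delta h))))"
    using teq2_sym[OF tensor_klin_sum_list[OF F, of "\<lambda>(a, b). sH (eps a) b" "Delta h"]]
    by (simp add: case_prod_unfold)
  finally show ?thesis using counit_left by simp
qed

section \<open>Convolution inverses of colinear maps\<close>

lemma concat_map_singleton: "concat (map (\<lambda>x. [f x]) L) = map f L"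
  by (induction L) auto

lemma teq2_antipode_contract:
  assumes q: "klin sH sA q"
  shows "teqA (concat (map (\<lambda>(x, d). map (\<lambda>(x1, x2). (a * q d, x1 * S x2)) (Delta x)) (Delta h)))
    [(a * q h, 1)]"
proof -
  have "teqA (concat (map (\<lambda>(x, d). map (\<lambda>(x1, x2). (a * q d, x1 * S x2)) (Delta x)) (Delta h)))
      (concat (map (\<lambda>(x, d). [(a * q d, sum_list (map (\<lambda>(x1, x2). x1 * S x2) (Delta x)))]) (Delta h)))"
  proof (rule teq2_concat, clarify)
    fix x d
    show "teqA (map (\<lambda>(x1, x2). (a * q d, x1 * S x2)) (Delta x))
        [(a * q d, sum_list (map (\<lambda>(x1, x2). x1 * S x2) (Delta x)))]"
      using teq2_sym[OF teq2_sum_list_right[of sA sH "a * q d" "\<lambda>(x1, x2). x1 * S x2" "Delta x"]]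
      by (simp add: case_prod_unfold)
  qed
  also have "teqA \<dots> (concat (map (\<lambda>(x, d). [(a * q (sH (eps x) d), 1)]) (Delta h)))"
  proof (rule teq2_concat, clarify)
    fix x d
    have "teqA [(a * q d, sH (eps x) 1)] [(sA (eps x) (a * q d), 1)]" by (rule teq2_scal_right_left)
    then show "teqA [(a * q d, sum_list (map (\<lambda>(x1, x2). x1 * S x2) (Delta x)))] [(a * q (sH (eps x) d), 1)]"
      by (simp add: antipode_right klin_scal[OF q] kalg_mult_right[OF kalgA])
  qed
  also have "teqA \<dots> [(sum_list (map (\<lambda>(x, d). a * q (sH (eps x) d)) (Delta h)), 1)]"
    using teq2_sym[OF teq2_sum_list_left[of sA sH "\<lambda>(x, d). a * q (sH (eps x) d)" "Delta h" 1]]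
    by (simp add: case_prod_unfold concat_map_singleton)
  also have "sum_list (map (\<lambda>(x, d). a * q (sH (eps x) d)) (Delta h)) = a * q h"
  proof -
    have "a * q h = a * q (sum_list (map (\<lambda>(x, d). sH (eps x) d) (Delta h)))"
      by (simp add: counit_left)
    also have "\<dots> = sum_list (map (\<lambda>(x, d). a * q (sH (eps x) d)) (Delta h))"
      by (simp add: klin_sum_list[OF q] sum_list_const_mult[symmetric] case_prod_unfold)
    finally show ?thesis by simp
  qed
  finally show ?thesis .
qed

lemma teq2_coassoc_antipode_contract:
  assumes q: "klin sH sA q"
  shows "teqA (concat (map (\<lambda>(h1, h2). map (\<lambda>(c, d). (a * q d, h1 * S c)) (Delta h2)) (Delta h)))
    [(a * q h, 1)]"
proof -
  let ?\<Gamma> = "\<lambda>x y z. [(a * q z, x * S y)]"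
  have "concat (map (\<lambda>(h1, h2). map (\<lambda>(c, d). (a * q d, h1 * S c)) (Delta h2)) (Delta h))
      = concat (map (\<lambda>(x, y, z). ?\<Gamma> x y z) (dr Delta (Delta h)))"
    unfolding dr_concat by (simp add: case_prod_unfold concat_map_singleton)
  also have "teqA \<dots> (concat (map (\<lambda>(x, y, z). ?\<Gamma> x y z) (dl Delta (Delta h))))"
    by (rule teq2_sym, rule teq3_concat_map_balanced[OF Delta_coassoc])
       (simp_all add: klin_add[OF S_klin] klin_add[OF q] klin_scal[OF S_klin] klin_scal[OF q]
         distrib_left distrib_right kalg_mult_right[OF kalgH] kalg_mult_left[OF kalgH]
         kalg_mult_right[OF kalgA] teq2_add_left teq2_add_right teq2_scal_right_left teq2_refl)
  also have "\<dots> = concat (map (\<lambda>(x, d). map (\<lambda>(x1, x2). (a * q d, x1 * S x2)) (Delta x)) (Delta h))"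
    unfolding dl_concat by (simp add: case_prod_unfold concat_map_singleton)
  also have "teqA \<dots> [(a * q h, 1)]" by (rule teq2_antipode_contract[OF q])
  finally show ?thesis .
qed

lemma teq2_conv_antipode_contract:
  assumes p: "klin sH sA p" and q: "klin sH sA q"
  shows "teqA (concat (map (\<lambda>(a, b). concat (map (\<lambda>(a1, a2).
      map (\<lambda>(b1, b2). (p a1 * q b2, a2 * S b1)) (Delta b)) (Delta a))) (Delta h)))
    [(conv Delta p q h, 1)]"
proof -
  let ?\<Phi> = "\<lambda>x y z. map (\<lambda>(b1, b2). (p x * q b2, y * S b1)) (Delta z)"
  have twist: "tensor_klin sH (?\<Phi> x y)" for x y by (rule tensor_klin_twist[OF q])
  have "concat (map (\<lambda>(a, b). concat (map (\<lambda>(a1, a2).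
      map (\<lambda>(b1, b2). (p a1 * q b2, a2 * S b1)) (Delta b)) (Delta a))) (Delta h))
      = concat (map (\<lambda>(x, y, z). ?\<Phi> x y z) (dl Delta (Delta h)))"
    unfolding dl_concat by simp
  also have "teqA \<dots> (concat (map (\<lambda>(x, y, z). ?\<Phi> x y z) (dr Delta (Delta h))))"
  proof (rule teq3_concat_map_balanced[OF Delta_coassoc])
    fix x x' y z
    show "teqA (?\<Phi> (x + x') y z) (?\<Phi> x y z @ ?\<Phi> x' y z)"
      by (rule teq2_map_split) (auto simp: klin_add[OF p] distrib_right teq2_add_left)
  next
    fix x y y' z
    show "teqA (?\<Phi> x (y + y') z) (?\<Phi> x y z @ ?\<Phi> x y' z)"
      by (rule teq2_map_split) (auto simp: distrib_right teq2_add_right)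
  next
    fix c x y z
    show "teqA (?\<Phi> (sH c x) y z) (scl sA c (?\<Phi> x y z))"
      unfolding map_map by (rule teq2_map) (auto simp: klin_scal[OF p] kalg_mult_left[OF kalgA] teq2_refl)
  next
    fix c x y z
    show "teqA (?\<Phi> x (sH c y) z) (scl sA c (?\<Phi> x y z))"
      unfolding map_map by (rule teq2_map) (auto simp: kalg_mult_left[OF kalgH] teq2_scal_right_left)
  qed (rule tensor_klin_add[OF twist] tensor_klin_scal[OF twist])+
  also have "\<dots> = concat (map (\<lambda>(a, b). concat (map (\<lambda>(b1, b2).
      map (\<lambda>(c, d). (p a * q d, b1 * S c)) (Delta b2)) (Delta b))) (Delta h))"
    unfolding dr_concat by simp
  also have "teqA \<dots> (concat (map (\<lambda>(a, b). [(p a * q b, 1)]) (Delta h)))"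
    by (rule teq2_concat) (auto intro: teq2_coassoc_antipode_contract[OF q])
  also have "teqA \<dots> [(conv Delta p q h, 1)]"
    using teq2_sym[OF teq2_sum_list_left[of sA sH "\<lambda>(a, b). p a * q b" "Delta h" 1]]
    by (simp add: conv_def case_prod_unfold concat_map_singleton)
  finally show ?thesis .
qed

lemma tmul_colinear_twist: "tmul (map (\<lambda>(a1, a2). (t a1, a2)) L) (map (\<lambda>(b1, b2). (u b2, S b1)) M)
   = concat (map (\<lambda>(a1, a2). map (\<lambda>(b1, b2). (t a1 * u b2, a2 * S b1)) M) L)"
  by (induction L) (auto simp: tmul_Cons comp_def case_prod_unfold)

lemma colinear_klin: "colinear sH sA Delta rho c \<Longrightarrow> klin sH sA c"
  by (simp add: colinear_def)

lemma tconv_rho_colinear_twist: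
  assumes t: "colinear sH sA Delta rho t" and u: "klin sH sA u" and tu: "conv Delta t u = cunit sA eps"
  shows "teqA (tconv (\<lambda>x. rho (t x)) (\<lambda>x. map (\<lambda>(a, b). (u b, S a)) (Delta x)) h) (tunit h)"
proof -
  have t_klin: "klin sH sA t" and t_rho: "\<And>x. teqA (rho (t x)) (map (\<lambda>(a, b). (t a, b)) (Delta x))"
    using t by (simp_all add: colinear_def)
  have "teqA (tconv (\<lambda>x. rho (t x)) (\<lambda>x. map (\<lambda>(a, b). (u b, S a)) (Delta x)) h)
      (concat (map (\<lambda>(a, b). tmul (map (\<lambda>(a1, a2). (t a1, a2)) (Delta a))
        (map (\<lambda>(b1, b2). (u b2, S b1)) (Delta b))) (Delta h)))"
    unfolding tconv_def by (rule teq2_concat) (auto intro: teq2_tmul[OF kalgA kalgH] t_rho teq2_refl)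
  also have "\<dots> = concat (map (\<lambda>(a, b). concat (map (\<lambda>(a1, a2).
      map (\<lambda>(b1, b2). (t a1 * u b2, a2 * S b1)) (Delta b)) (Delta a))) (Delta h))"
    by (simp add: tmul_colinear_twist)
  also have "teqA \<dots> [(conv Delta t u h, 1)]" by (rule teq2_conv_antipode_contract[OF t_klin u])
  finally show ?thesis by (simp add: tu cunit_def tunit_def)
qed

lemma tconv_rho_comp:
  assumes ut: "conv Delta u t = cunit sA eps"
  shows "teqA (tconv (\<lambda>x. rho (u x)) (\<lambda>x. rho (t x)) h) (tunit h)"
proof -
  have "teqA (tconv (\<lambda>x. rho (u x)) (\<lambda>x. rho (t x)) h) (concat (map (\<lambda>(a, b). rho (u a * t b)) (Delta h)))"
    unfolding tconv_def by (rule teq2_concat) (auto intro: teq2_sym[OF rho_mult])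
  also have "teqA \<dots> (rho (sum_list (map (\<lambda>(a, b). u a * t b) (Delta h))))"
    using teq2_sym[OF tensor_klin_sum_list[OF tensor_klin_rho, of "\<lambda>(a, b). u a * t b" "Delta h"]]
    by (simp add: case_prod_unfold)
  also have "sum_list (map (\<lambda>(a, b). u a * t b) (Delta h)) = sA (eps h) 1"
    using fun_cong[OF ut, of h] by (simp add: conv_def cunit_def)
  also have "teqA (rho (sA (eps h) 1)) (scl sA (eps h) (rho 1))" by (rule rho_scal)
  also have "teqA \<dots> (scl sA (eps h) [(1, 1)])" by (rule teq2_scl[OF kmodA rho_one])
  finally show ?thesis by (simp add: tunit_def)
qed

text \<open>In the convolution algebra of maps H \<rightarrow> A \<otimes> H, \<rho> \<circ> u is a left inverse and
  h \<mapsto> u(h2) \<otimes> S(h1) a right inverse of \<rho> \<circ> t, so the two coincide.\<close>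

lemma rho_conv_inverse:
  assumes t: "colinear sH sA Delta rho t" and u: "klin sH sA u"
    and tu: "conv Delta t u = cunit sA eps" and ut: "conv Delta u t = cunit sA eps"
  shows "teqA (rho (u h)) (map (\<lambda>(a, b). (u b, S a)) (Delta h))"
proof -
  let ?Q = "\<lambda>x. rho (u x)" and ?R = "\<lambda>x. rho (t x)" and ?Q' = "\<lambda>x. map (\<lambda>(a, b). (u b, S a)) (Delta x)"
  have Q: "tensor_klin sH ?Q" and R: "tensor_klin sH ?R"
    using tensor_klin_rho_comp[OF u] tensor_klin_rho_comp[OF colinear_klin[OF t]] .
  have Q': "tensor_klin sH ?Q'" using tensor_klin_twist[OF u, of 1 1] by simp
  have "teqA (?Q h) (tconv ?Q tunit h)" by (rule teq2_sym[OF tconv_tunit_right[OF Q]])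
  also have "teqA \<dots> (tconv ?Q (tconv ?R ?Q') h)"
    by (rule teq2_tconv) (auto intro: teq2_refl teq2_sym[OF tconv_rho_colinear_twist[OF t u tu]])
  also have "teqA \<dots> (tconv (tconv ?Q ?R) ?Q' h)" by (rule teq2_sym[OF tconv_assoc[OF Q R Q']])
  also have "teqA \<dots> (tconv tunit ?Q' h)" by (rule teq2_tconv) (auto intro: teq2_refl tconv_rho_comp[OF ut])
  also have "teqA \<dots> (?Q' h)" by (rule tconv_tunit_left[OF Q'])
  finally show ?thesis .
qed

abbreviation B where "B \<equiv> coinv sH sA rho"

lemma coinv_iff: "b \<in> B \<longleftrightarrow> teqA (rho b) [(b, 1)]"
  by (simp add: coinv_def)

definition anticolinear :: "('h \<Rightarrow> 'a) \<Rightarrow> bool" where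
  "anticolinear y \<longleftrightarrow> klin sH sA y \<and> (\<forall>h. teqA (rho (y h)) (map (\<lambda>(a, b). (y b, S a)) (Delta h)))"

lemma OmegaA_anticolinear:
  assumes s: "s \<in> OmegaA sH sA Delta rho"
  shows "anticolinear (\<lambda>x. s (S x))"
  unfolding anticolinear_def
  using rho_conv_inverse[OF OmegaA_colinear[OF s] OmegaA_klin_antipode[OF s] OmegaA_conv_antipode[OF s]]
    OmegaA_klin_antipode[OF s]
  by simp

lemma colinear_rho: "colinear sH sA Delta rho c \<Longrightarrow> teqA (rho (c x)) (map (\<lambda>(a, b). (c a, b)) (Delta x))"
  by (simp add: colinear_def)

lemma rho_conv: "teqA (rho (conv Delta f g h)) (concat (map (\<lambda>(a, b). rho (f a * g b)) (Delta h)))"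
  using tensor_klin_sum_list[OF tensor_klin_rho, of "\<lambda>(a, b). f a * g b" "Delta h"]
  by (simp add: conv_def case_prod_unfold)

lemma coinv_conv_colinear_mult_anticolinear:
  assumes c: "colinear sH sA Delta rho c" and y: "anticolinear y" and \<beta>: "\<beta> \<in> B"
  shows "conv Delta (\<lambda>a. c a * \<beta>) y h \<in> B"
proof -
  have y_klin: "klin sH sA y" and y_rho: "\<And>x. teqA (rho (y x)) (map (\<lambda>(a, b). (y b, S a)) (Delta x))"
    using y by (auto simp: anticolinear_def)
  have "teqA (rho (conv Delta (\<lambda>a. c a * \<beta>) y h)) (concat (map (\<lambda>(a, b). rho (c a * \<beta> * y b)) (Delta h)))"
    by (rule rho_conv)
  also have "teqA \<dots> (concat (map (\<lambda>(a, b). concat (map (\<lambda>(a1, a2).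
      map (\<lambda>(b1, b2). (c a1 * \<beta> * y b2, a2 * S b1)) (Delta b)) (Delta a))) (Delta h)))"
  proof (rule teq2_concat, clarify)
    fix a b
    have "teqA (rho (c a * \<beta> * y b)) (tmul (tmul (rho (c a)) (rho \<beta>)) (rho (y b)))"
      by (rule teq2_trans[OF rho_mult teq2_tmul[OF kalgA kalgH rho_mult teq2_refl]])
    also have "teqA \<dots> (tmul (tmul (map (\<lambda>(a1, a2). (c a1, a2)) (Delta a)) [(\<beta>, 1)])
        (map (\<lambda>(b1, b2). (y b2, S b1)) (Delta b)))"
      using \<beta> by (intro teq2_tmul[OF kalgA kalgH] colinear_rho[OF c] y_rho) (simp_all add: coinv_iff)
    also have "\<dots> = concat (map (\<lambda>(a1, a2). map (\<lambda>(b1, b2). (c a1 * \<beta> * y b2, a2 * S b1)) (Delta b)) (Delta a))"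
      using tmul_colinear_twist[of "\<lambda>a. c a * \<beta>" "Delta a" y "Delta b"]
      by (simp add: tmul_single_right comp_def case_prod_unfold)
    finally show "teqA (rho (c a * \<beta> * y b))
        (concat (map (\<lambda>(a1, a2). map (\<lambda>(b1, b2). (c a1 * \<beta> * y b2, a2 * S b1)) (Delta b)) (Delta a)))" .
  qed
  also have "teqA \<dots> [(conv Delta (\<lambda>a. c a * \<beta>) y h, 1)]"
    by (rule teq2_conv_antipode_contract[OF klin_mult_right[OF kalgA colinear_klin[OF c]] y_klin])
  finally show ?thesis by (simp add: coinv_iff)
qed

lemma coinv_conv_colinear_anticolinear:
  assumes "colinear sH sA Delta rho c" and "anticolinear y"
  shows "conv Delta c y h \<in> B"
  using coinv_conv_colinear_mult_anticolinear[OF assms, of 1] rho_one by (simp add: coinv_iff)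

lemma colinear_conv_coinv:
  assumes v: "klin sH sA v" and vB: "\<And>h. v h \<in> B" and t: "colinear sH sA Delta rho t"
  shows "colinear sH sA Delta rho (conv Delta v t)"
  unfolding colinear_def
proof (intro conjI allI)
  have t_klin: "klin sH sA t" by (rule colinear_klin[OF t])
  show "klin sH sA (conv Delta v t)" by (rule klin_conv[OF kalgA v t_klin])
  fix h
  let ?\<Phi> = "\<lambda>x y z. [(v x * t y, z)]"
  have "teqA (rho (conv Delta v t h)) (concat (map (\<lambda>(a, b). rho (v a * t b)) (Delta h)))"
    by (rule rho_conv)
  also have "teqA \<dots> (concat (map (\<lambda>(x, y, z). ?\<Phi> x y z) (dr Delta (Delta h))))"
    unfolding dr_concat
  proof (rule teq2_concat, clarify)
    fix a b
    have "teqA (rho (v a * t b)) (tmul [(v a, 1)] (map (\<lambda>(b1, b2). (t b1, b2)) (Delta b)))"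
      using vB[of a]
      by (intro teq2_trans[OF rho_mult] teq2_tmul[OF kalgA kalgH] colinear_rho[OF t]) (simp add: coinv_iff)
    then show "teqA (rho (v a * t b)) (concat (map (\<lambda>(b1, b2). ?\<Phi> a b1 b2) (Delta b)))"
      by (simp add: tmul_single_left comp_def case_prod_unfold concat_map_singleton)
  qed
  also have "teqA \<dots> (concat (map (\<lambda>(x, y, z). ?\<Phi> x y z) (dl Delta (Delta h))))"
    by (rule teq2_sym, rule teq3_concat_map_balanced[OF Delta_coassoc])
       (simp_all add: klin_add[OF v] klin_add[OF t_klin] klin_scal[OF v] klin_scal[OF t_klin]
         distrib_left distrib_right kalg_mult_right[OF kalgA] kalg_mult_left[OF kalgA]
         teq2_add_left teq2_add_right teq2_scal_right_left teq2_refl)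
  also have "\<dots> = concat (map (\<lambda>(a, b). map (\<lambda>(a1, a2). (v a1 * t a2, b)) (Delta a)) (Delta h))"
    unfolding dl_concat by (simp add: case_prod_unfold concat_map_singleton)
  also have "teqA \<dots> (concat (map (\<lambda>(a, b). [(conv Delta v t a, b)]) (Delta h)))"
  proof (rule teq2_concat, clarify)
    fix a b
    show "teqA (map (\<lambda>(a1, a2). (v a1 * t a2, b)) (Delta a)) [(conv Delta v t a, b)]"
      using teq2_sym[OF teq2_sum_list_left[of sA sH "\<lambda>(a1, a2). v a1 * t a2" "Delta a" b]]
      by (simp add: conv_def case_prod_unfold)
  qed
  finally show "teqA (rho (conv Delta v t h)) (map (\<lambda>(a, b). (conv Delta v t a, b)) (Delta h))"
    by (simp add: case_prod_unfold concat_map_singleton)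
qed

end

locale cleft_cocomm = hopf_comodule_alg sH Delta eps S sA rho
  for sH :: "'k::comm_ring_1 \<Rightarrow> 'h::ring_1 \<Rightarrow> 'h" and Delta :: "'h \<Rightarrow> ('h \<times> 'h) list"
    and eps :: "'h \<Rightarrow> 'k" and S :: "'h \<Rightarrow> 'h"
    and sA :: "'k \<Rightarrow> 'a::ring_1 \<Rightarrow> 'a" and rho :: "'a \<Rightarrow> ('a \<times> 'h) list" +
  fixes t u :: "'h \<Rightarrow> 'a"
  assumes cocomm: "cocommutative sH Delta"
    and t_colinear: "colinear sH sA Delta rho t"
    and t_u_inverse: "conv_inverse sH sA Delta eps t u"
    and coinv_comm: "\<forall>x \<in> coinv sH sA rho. \<forall>y \<in> coinv sH sA rho. x * y = y * x"
begin

lemma t_klin: "klin sH sA t" by (rule colinear_klin[OF t_colinear])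
lemma u_klin: "klin sH sA u" using t_u_inverse by (simp add: conv_inverse_def)
lemma conv_t_u: "conv Delta t u = cunit sA eps" using t_u_inverse by (simp add: conv_inverse_def)
lemma coinv_commute: "x \<in> B \<Longrightarrow> y \<in> B \<Longrightarrow> x * y = y * x" using coinv_comm by blast

lemma conv_commute_coinv:
  assumes fB: "\<And>h. f h \<in> B" and gB: "\<And>h. g h \<in> B" and f: "klin sH sA f" and g: "klin sH sA g"
  shows "conv Delta f g = conv Delta g f"
proof
  fix h
  have "conv Delta f g h = sweedler h (\<lambda>a c. g c * f a)" by (simp add: conv_sweedler coinv_commute[OF fB gB])
  also have "\<dots> = sweedler h (\<lambda>a c. g a * f c)"
    by (rule sweedler_cocomm[OF cocomm kmodA]) (intro klin_mult_right[OF kalgA] klin_mult_left[OF kalgA] f g)+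
  finally show "conv Delta f g h = conv Delta g f h" by (simp add: conv_sweedler)
qed

text \<open>The action does not depend on the cleaving map: with f = t * (s \<circ> S) and
  g = s * u, which are B-valued with f * g = \<epsilon>, one has t = f * s and u = (s \<circ> S) * g, and
  the B-valued map (s b) * (s \<circ> S) commutes with f under convolution.\<close>

lemma act_eq_OmegaA:
  assumes s: "s \<in> OmegaA sH sA Delta rho" and b: "b \<in> B"
  shows "act Delta t u h b = conv Delta (\<lambda>a. s a * b) (\<lambda>x. s (S x)) h"
proof -
  let ?s' = "\<lambda>x. s (S x)" and ?sb = "\<lambda>a. s a * b"
  have sl: "klin sH sA s" and s'l: "klin sH sA ?s'" and sbl: "klin sH sA ?sb"
    using OmegaA_klin[OF s] OmegaA_klin_antipode[OF s] klin_mult_right[OF kalgA OmegaA_klin[OF s]] .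
  have s's: "conv Delta ?s' s = cunit sA eps" using OmegaA_conv_antipode[OF s] by simp
  define f where "f = conv Delta t ?s'"
  define g where "g = conv Delta s u"
  define X where "X = conv Delta ?sb ?s'"
  have fl: "klin sH sA f" and gl: "klin sH sA g" and Xl: "klin sH sA X"
    unfolding f_def g_def X_def using klin_conv_A t_klin u_klin sl s'l sbl by blast+
  have fB: "f h \<in> B" and XB: "X h \<in> B" for h
    unfolding f_def X_def
    using coinv_conv_colinear_anticolinear[OF t_colinear OmegaA_anticolinear[OF s]]
      coinv_conv_colinear_mult_anticolinear[OF OmegaA_colinear[OF s] OmegaA_anticolinear[OF s] b] by blast+
  have fs: "conv Delta f s = t" unfolding f_def by (simp add: conv_assoc_A[OF t_klin s'l sl] s's conv_cunit_right_A[OF t_klin])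
  have s'g: "conv Delta ?s' g = u"
    unfolding g_def by (simp add: conv_assoc_A[OF s'l sl u_klin, symmetric] s's conv_cunit_left_A[OF u_klin])
  have fg: "conv Delta f g = cunit sA eps"
    unfolding f_def by (simp add: conv_assoc_A[OF t_klin s'l gl] s'g conv_t_u)
  have tb: "(\<lambda>a. t a * b) = conv Delta f ?sb"
    using fs by (auto simp: conv_sweedler sweedler_mult_right mult.assoc)
  have "act Delta t u h b = conv Delta (\<lambda>a. t a * b) u h" by (simp add: act_def conv_def)
  also have "\<dots> = conv Delta (conv Delta f ?sb) (conv Delta ?s' g) h" by (simp only: tb s'g)
  also have "conv Delta (conv Delta f ?sb) (conv Delta ?s' g) = conv Delta (conv Delta f X) g"
    unfolding X_def
    by (simp add: conv_assoc_A[OF fl sbl klin_conv_A[OF s'l gl]] conv_assoc_A[OF sbl s'l gl]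
        conv_assoc_A[OF fl klin_conv_A[OF sbl s'l] gl])
  also have "conv Delta f X = conv Delta X f" by (rule conv_commute_coinv[OF fB XB fl Xl])
  also have "conv Delta (conv Delta X f) g = X" by (simp add: conv_assoc_A[OF Xl fl gl] fg conv_cunit_right_A[OF Xl])
  finally show ?thesis unfolding X_def .
qed

lemma Z1D:
  assumes "v \<in> Z1 sH sA Delta eps rho t u"
  shows "klin sH sA v" and "\<And>h. v h \<in> B"
    and "\<exists>w. klin sH sA w \<and> (\<forall>h. w h \<in> B) \<and> conv Delta v w = cunit sA eps \<and> conv Delta w v = cunit sA eps"
    and "\<And>h k. v (h * k) = sum_list (map (\<lambda>(x, y). act Delta t u x (v k) * v y) (Delta h))"
  using assms unfolding Z1_def by auto

end

section \<open>Cocycles versus algebra sections\<close>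

locale cleft_cocomm_section = cleft_cocomm sH Delta eps S sA rho t u
  for sH :: "'k::comm_ring_1 \<Rightarrow> 'h::ring_1 \<Rightarrow> 'h" and Delta :: "'h \<Rightarrow> ('h \<times> 'h) list"
    and eps :: "'h \<Rightarrow> 'k" and S :: "'h \<Rightarrow> 'h"
    and sA :: "'k \<Rightarrow> 'a::ring_1 \<Rightarrow> 'a" and rho :: "'a \<Rightarrow> ('a \<times> 'h) list"
    and t u :: "'h \<Rightarrow> 'a" +
  fixes t0 :: "'h \<Rightarrow> 'a"
  assumes t0: "t0 \<in> OmegaA sH sA Delta rho"
begin

abbreviation u0 where "u0 \<equiv> \<lambda>x. t0 (S x)"

lemma t0_klin: "klin sH sA t0" by (rule OmegaA_klin[OF t0])
lemma u0_klin: "klin sH sA u0" by (rule OmegaA_klin_antipode[OF t0])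
lemma conv_t0_u0: "conv Delta t0 u0 = cunit sA eps" using OmegaA_conv_antipode[OF t0] by simp
lemma conv_u0_t0: "conv Delta u0 t0 = cunit sA eps" using OmegaA_conv_antipode[OF t0] by simp

definition act0 :: "'a \<Rightarrow> 'h \<Rightarrow> 'a" where
  "act0 \<beta> = conv Delta (\<lambda>x. t0 x * \<beta>) u0"

lemma klin_act0: "klin sH sA (act0 \<beta>)"
  unfolding act0_def by (rule klin_conv_A[OF klin_mult_right[OF kalgA t0_klin] u0_klin])

lemma act0_coinv: "\<beta> \<in> B \<Longrightarrow> act0 \<beta> h \<in> B"
  unfolding act0_def by (rule coinv_conv_colinear_mult_anticolinear[OF OmegaA_colinear[OF t0] OmegaA_anticolinear[OF t0]])

lemma act_eq_act0: "\<beta> \<in> B \<Longrightarrow> act Delta t u h \<beta> = act0 \<beta> h"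
  unfolding act0_def by (rule act_eq_OmegaA[OF t0])

lemma conv_act0_t0: "conv Delta (act0 \<beta>) t0 = (\<lambda>x. t0 x * \<beta>)"
  unfolding act0_def
  by (simp add: conv_assoc_A[OF klin_mult_right[OF kalgA t0_klin] u0_klin t0_klin] conv_u0_t0
      conv_cunit_right_A[OF klin_mult_right[OF kalgA t0_klin]])

lemma conv_u0_t0_cancel: "klin sH sA s \<Longrightarrow> conv Delta (conv Delta s u0) t0 = s"
  by (simp add: conv_assoc_A[OF _ u0_klin t0_klin] conv_u0_t0 conv_cunit_right_A)

lemma conv_t0_u0_cancel: "klin sH sA v \<Longrightarrow> conv Delta (conv Delta v t0) u0 = v"
  by (simp add: conv_assoc_A[OF _ t0_klin u0_klin] conv_t0_u0 conv_cunit_right_A)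

lemma conv_u0_cocycle:
  assumes s: "s \<in> OmegaA sH sA Delta rho"
  shows "conv Delta s u0 (h * k)
    = sum_list (map (\<lambda>(x, y). act Delta t u x (conv Delta s u0 k) * conv Delta s u0 y) (Delta h))"
proof -
  let ?s' = "\<lambda>x. s (S x)" and ?v = "conv Delta s u0" and ?\<beta> = "conv Delta s u0 k"
  have sl: "klin sH sA s" and s'l: "klin sH sA ?s'" and sbl: "klin sH sA (\<lambda>x. s x * ?\<beta>)"
    using OmegaA_klin[OF s] OmegaA_klin_antipode[OF s] klin_mult_right[OF kalgA OmegaA_klin[OF s]] .
  have s's: "conv Delta ?s' s = cunit sA eps" using OmegaA_conv_antipode[OF s] by simp
  have "?\<beta> \<in> B"
    by (rule coinv_conv_colinear_anticolinear[OF OmegaA_colinear[OF s] OmegaA_anticolinear[OF t0]])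
  then have "sum_list (map (\<lambda>(x, y). act Delta t u x ?\<beta> * ?v y) (Delta h))
      = conv Delta (conv Delta (\<lambda>x. s x * ?\<beta>) ?s') ?v h"
    by (simp add: act_eq_OmegaA[OF s] conv_def[of Delta "conv Delta (\<lambda>x. s x * ?\<beta>) ?s'"])
  also have "conv Delta (conv Delta (\<lambda>x. s x * ?\<beta>) ?s') ?v = conv Delta (\<lambda>x. s x * ?\<beta>) u0"
    by (simp add: conv_assoc_A[OF sbl s'l klin_conv_A[OF sl u0_klin]] conv_assoc_A[OF s'l sl u0_klin, symmetric]
        s's conv_cunit_left_A[OF u0_klin])
  also have "conv Delta (\<lambda>x. s x * ?\<beta>) u0 h = sweedler h (\<lambda>a b. sweedler k (\<lambda>c d. s (a * c) * u0 (b * d)))"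
    by (simp add: conv_sweedler OmegaA_mult[OF s] OmegaA_mult[OF t0] S_mult sweedler_mult_left
        sweedler_mult_right mult.assoc)
  also have "\<dots> = ?v (h * k)"
    unfolding conv_sweedler
    by (rule sweedler_mult[OF kmodA, symmetric]) (intro klin_mult_right[OF kalgA] klin_mult_left[OF kalgA] sl u0_klin)+
  finally show ?thesis by simp
qed

lemma conv_u0_Z1:
  assumes s: "s \<in> OmegaA sH sA Delta rho"
  shows "conv Delta s u0 \<in> Z1 sH sA Delta eps rho t u"
proof -
  let ?s' = "\<lambda>x. s (S x)" and ?v = "conv Delta s u0" and ?w = "conv Delta t0 (\<lambda>x. s (S x))"
  have sl: "klin sH sA s" and s'l: "klin sH sA ?s'" and wl: "klin sH sA ?w"
    using OmegaA_klin[OF s] OmegaA_klin_antipode[OF s] klin_conv_A[OF t0_klin OmegaA_klin_antipode[OF s]] .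
  have ss': "conv Delta s ?s' = cunit sA eps" and s's: "conv Delta ?s' s = cunit sA eps"
    using OmegaA_conv_antipode[OF s] by auto
  have "conv Delta ?v ?w = cunit sA eps"
    by (simp add: conv_assoc_A[OF sl u0_klin wl] conv_assoc_A[OF u0_klin t0_klin s'l, symmetric] conv_u0_t0
        conv_cunit_left_A[OF s'l] ss')
  moreover have "conv Delta ?w ?v = cunit sA eps"
    by (simp add: conv_assoc_A[OF t0_klin s'l klin_conv_A[OF sl u0_klin]] conv_assoc_A[OF s'l sl u0_klin, symmetric]
        s's conv_cunit_left_A[OF u0_klin] conv_t0_u0)
  moreover have "?v h \<in> B" and "?w h \<in> B" for h
    using coinv_conv_colinear_anticolinear[OF OmegaA_colinear[OF s] OmegaA_anticolinear[OF t0]]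
      coinv_conv_colinear_anticolinear[OF OmegaA_colinear[OF t0] OmegaA_anticolinear[OF s]] by blast+
  ultimately show ?thesis
    unfolding Z1_def using klin_conv_A[OF sl u0_klin] wl conv_u0_cocycle[OF s] by blast
qed

lemma Z1_mult_act0:
  assumes v: "v \<in> Z1 sH sA Delta eps rho t u"
  shows "v (a * c) = conv Delta v (act0 (v c)) a"
proof -
  have vl: "klin sH sA v" and vB: "\<And>h. v h \<in> B" using Z1D[OF v] by auto
  have "v (a * c) = conv Delta (act0 (v c)) v a"
    using Z1D(4)[OF v, of a c] by (simp add: act_eq_act0[OF vB] conv_def)
  also have "conv Delta (act0 (v c)) v = conv Delta v (act0 (v c))"
    by (rule conv_commute_coinv[OF act0_coinv[OF vB] vB klin_act0 vl])
  finally show ?thesis .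
qed

lemma conv_t0_mult:
  assumes v: "v \<in> Z1 sH sA Delta eps rho t u"
  shows "conv Delta v t0 (h * k) = conv Delta v t0 h * conv Delta v t0 k"
proof -
  have vl: "klin sH sA v" using Z1D[OF v] by auto
  have "conv Delta v t0 (h * k) = sweedler h (\<lambda>a b. sweedler k (\<lambda>c d. v (a * c) * t0 (b * d)))"
    unfolding conv_sweedler
    by (rule sweedler_mult[OF kmodA]) (intro klin_mult_right[OF kalgA] klin_mult_left[OF kalgA] vl t0_klin)+
  also have "\<dots> = sweedler k (\<lambda>c d. sweedler h (\<lambda>a b. conv Delta v (act0 (v c)) a * t0 b) * t0 d)"
    by (subst sweedler_swap) (simp add: Z1_mult_act0[OF v] OmegaA_mult[OF t0] mult.assoc sweedler_mult_right)
  also have "\<dots> = sweedler k (\<lambda>c d. conv Delta v t0 h * v c * t0 d)"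
    by (simp add: conv_sweedler[symmetric] conv_assoc_A[OF vl klin_act0 t0_klin] conv_act0_t0 conv_mult_const_right)
  also have "\<dots> = conv Delta v t0 h * conv Delta v t0 k"
    by (simp add: conv_sweedler sweedler_mult_left mult.assoc)
  finally show ?thesis .
qed

lemma conv_t0_one:
  assumes v: "v \<in> Z1 sH sA Delta eps rho t u"
  shows "conv Delta v t0 1 = 1"
proof -
  have vl: "klin sH sA v" using Z1D[OF v] by auto
  obtain w where wl: "klin sH sA w" and vw: "conv Delta v w = cunit sA eps" using Z1D(3)[OF v] by blast
  have conv_one: "conv Delta f g 1 = f 1 * g 1" if "klin sH sA f" "klin sH sA g" for f g
    unfolding conv_sweedler
    by (rule sweedler_one[OF kmodA]) (intro klin_mult_right[OF kalgA] klin_mult_left[OF kalgA] that)+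
  have "v 1 = conv Delta v (act0 (v 1)) 1" using Z1_mult_act0[OF v, of 1 1] by simp
  also have "\<dots> = v 1 * act0 (v 1) 1" by (rule conv_one[OF vl klin_act0])
  also have "act0 (v 1) 1 = v 1"
    unfolding act0_def by (simp add: conv_one[OF klin_mult_right[OF kalgA t0_klin] u0_klin] OmegaA_one[OF t0] S_one)
  finally have idem: "v 1 = v 1 * v 1" .
  have inv: "v 1 * w 1 = 1"
    using fun_cong[OF vw, of 1] by (simp add: conv_one[OF vl wl] cunit_def eps_one kmod_one[OF kmodA])
  have "v 1 = v 1 * (v 1 * w 1)" by (simp add: inv)
  also have "\<dots> = (v 1 * v 1) * w 1" by (simp only: mult.assoc)
  also have "\<dots> = 1" by (simp only: idem[symmetric] inv)
  finally show ?thesis by (simp add: conv_one[OF vl t0_klin] OmegaA_one[OF t0])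
qed

lemma conv_t0_OmegaA:
  assumes v: "v \<in> Z1 sH sA Delta eps rho t u"
  shows "conv Delta v t0 \<in> OmegaA sH sA Delta rho"
  unfolding OmegaA_def
  using colinear_conv_coinv[OF Z1D(1,2)[OF v] OmegaA_colinear[OF t0]] conv_t0_mult[OF v] conv_t0_one[OF v]
  by blast

lemma cohomologous_omega_equiv:
  assumes v1: "v1 \<in> Z1 sH sA Delta eps rho t u" and c: "cohomologous sH sA Delta rho t u v v1"
  shows "omega_equiv B (conv Delta v t0) (conv Delta v1 t0)"
proof -
  obtain b b' where b: "b \<in> B" and b': "b' \<in> B" and bb': "b * b' = 1" and b'b: "b' * b = 1"
    and v: "v = conv Delta (\<lambda>h. act Delta t u h b * b') v1"
    using c unfolding cohomologous_def by blast
  have v1l: "klin sH sA v1" and v1B: "\<And>h. v1 h \<in> B" using Z1D[OF v1] by auto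
  have fb: "(\<lambda>h. act Delta t u h b * b') = (\<lambda>h. b' * act0 b h)"
    by (simp add: act_eq_act0[OF b] coinv_commute[OF act0_coinv[OF b] b'])
  have v_act0: "conv Delta (conv Delta (act0 b) v1) t0 = conv Delta v1 (conv Delta (act0 b) t0)"
    by (simp add: conv_commute_coinv[OF act0_coinv[OF b] v1B klin_act0 v1l] conv_assoc_A[OF v1l klin_act0 t0_klin])
  have "conv Delta v t0 h = b' * (conv Delta v1 t0 h * b)" for h
  proof -
    have "conv Delta v t0 h = b' * conv Delta (conv Delta (act0 b) v1) t0 h"
      unfolding v fb by (simp add: conv_mult_const_left[abs_def])
    then show ?thesis by (simp add: v_act0 conv_act0_t0 conv_mult_const_right)
  qed
  then have "b * conv Delta v t0 h = conv Delta v1 t0 h * b" for h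
    by (simp add: mult.assoc[symmetric] bb')
  moreover have "b \<in> unitsB B" unfolding unitsB_def using b b' bb' b'b by blast
  ultimately show ?thesis unfolding omega_equiv_def by blast
qed

lemma omega_equiv_cohomologous:
  assumes s1: "s1 \<in> OmegaA sH sA Delta rho" and s2: "s2 \<in> OmegaA sH sA Delta rho"
    and e: "omega_equiv B s1 s2"
  shows "cohomologous sH sA Delta rho t u (conv Delta s1 u0) (conv Delta s2 u0)"
proof -
  obtain b b' where b: "b \<in> B" and b': "b' \<in> B" and bb': "b * b' = 1" and b'b: "b' * b = 1"
    and bs: "\<And>h. b * s1 h = s2 h * b"
    using e unfolding omega_equiv_def unitsB_def by blast
  let ?s2' = "\<lambda>x. s2 (S x)" and ?s2b = "\<lambda>x. s2 x * b"
  have s2l: "klin sH sA s2" and s2'l: "klin sH sA ?s2'" and s2bl: "klin sH sA ?s2b"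
    using OmegaA_klin[OF s2] OmegaA_klin_antipode[OF s2] klin_mult_right[OF kalgA OmegaA_klin[OF s2]] .
  have s2's2: "conv Delta ?s2' s2 = cunit sA eps" using OmegaA_conv_antipode[OF s2] by simp
  have fb: "(\<lambda>h. act Delta t u h b * b') = (\<lambda>h. b' * conv Delta ?s2b ?s2' h)"
    using act_eq_OmegaA[OF s2 b] coinv_commute[OF _ b']
      coinv_conv_colinear_mult_anticolinear[OF OmegaA_colinear[OF s2] OmegaA_anticolinear[OF s2] b]
    by simp
  have assoc: "conv Delta (conv Delta ?s2b ?s2') (conv Delta s2 u0) = conv Delta ?s2b u0"
    by (simp add: conv_assoc_A[OF s2bl s2'l klin_conv_A[OF s2l u0_klin]] conv_assoc_A[OF s2'l s2l u0_klin, symmetric]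
        s2's2 conv_cunit_left_A[OF u0_klin])
  have "conv Delta (\<lambda>h. act Delta t u h b * b') (conv Delta s2 u0) h = conv Delta s1 u0 h" for h
  proof -
    have "conv Delta (\<lambda>h. act Delta t u h b * b') (conv Delta s2 u0) h
        = b' * conv Delta (\<lambda>x. b * s1 x) u0 h"
      unfolding fb conv_mult_const_left assoc by (simp add: bs[symmetric] conv_mult_const_left)
    then show ?thesis by (simp add: conv_mult_const_left mult.assoc[symmetric] b'b)
  qed
  then show ?thesis
    unfolding cohomologous_def using b b' bb' b'b by (intro exI[of _ b] exI[of _ b']) auto
qed

end

context
  fixes Z :: "'z set" and Om :: "'o set" and R :: "'z \<Rightarrow> 'z \<Rightarrow> bool" and Q :: "'o \<Rightarrow> 'o \<Rightarrow> bool"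
    and F :: "'z \<Rightarrow> 'o" and G :: "'o \<Rightarrow> 'z"
  assumes F: "\<forall>v\<in>Z. F v \<in> Om" and G: "\<forall>s\<in>Om. G s \<in> Z \<and> F (G s) = s" and GF: "\<forall>v\<in>Z. G (F v) = v"
    and RQ: "\<forall>v\<in>Z. \<forall>v1\<in>Z. R v v1 \<longrightarrow> Q (F v) (F v1)"
    and QR: "\<forall>s1\<in>Om. \<forall>s2\<in>Om. Q s1 s2 \<longrightarrow> R (G s1) (G s2)"
begin

lemma image_equiv_class:
  assumes v: "v \<in> Z"
  shows "F ` ({(v, v1). v \<in> Z \<and> v1 \<in> Z \<and> R v v1} `` {v}) = {(s1, s2). s1 \<in> Om \<and> s2 \<in> Om \<and> Q s1 s2} `` {F v}"
proof
  show "F ` ({(v, v1). v \<in> Z \<and> v1 \<in> Z \<and> R v v1} `` {v}) \<subseteq> {(s1, s2). s1 \<in> Om \<and> s2 \<in> Om \<and> Q s1 s2} `` {F v}"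
    using v F RQ by auto
  show "{(s1, s2). s1 \<in> Om \<and> s2 \<in> Om \<and> Q s1 s2} `` {F v} \<subseteq> F ` ({(v, v1). v \<in> Z \<and> v1 \<in> Z \<and> R v v1} `` {v})"
  proof
    fix s assume "s \<in> {(s1, s2). s1 \<in> Om \<and> s2 \<in> Om \<and> Q s1 s2} `` {F v}"
    then have s: "s \<in> Om" and "Q (F v) s" and "F v \<in> Om" by auto
    then have "R v (G s)" using QR GF v by metis
    then have "G s \<in> {(v, v1). v \<in> Z \<and> v1 \<in> Z \<and> R v v1} `` {v}" using v G s by auto
    then show "s \<in> F ` ({(v, v1). v \<in> Z \<and> v1 \<in> Z \<and> R v v1} `` {v})" using G s by force
  qed
qed

lemma bij_betw_quotient_by_inverse:
  "\<exists>\<Phi>. bij_betw \<Phi> (Z // {(v, v1). v \<in> Z \<and> v1 \<in> Z \<and> R v v1}) (Om // {(s1, s2). s1 \<in> Om \<and> s2 \<in> Om \<and> Q s1 s2})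
     \<and> (\<forall>v\<in>Z. \<Phi> ({(v, v1). v \<in> Z \<and> v1 \<in> Z \<and> R v v1} `` {v})
           = {(s1, s2). s1 \<in> Om \<and> s2 \<in> Om \<and> Q s1 s2} `` {F v})"
proof -
  define RZ where "RZ = {(v, v1). v \<in> Z \<and> v1 \<in> Z \<and> R v v1}"
  define RO where "RO = {(s1, s2). s1 \<in> Om \<and> s2 \<in> Om \<and> Q s1 s2}"
  note classes = image_equiv_class[folded RZ_def RO_def]
  have inj: "inj_on F Z" using GF by (metis inj_on_def)
  have sub: "X \<subseteq> Z" if "X \<in> Z // RZ" for X using that unfolding RZ_def quotient_def by auto
  have "inj_on (\<lambda>X. F ` X) (Z // RZ)"
  proof (rule inj_onI)
    fix X Y assume "X \<in> Z // RZ" "Y \<in> Z // RZ" "F ` X = F ` Y"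
    then show "X = Y" using inj_on_image_eq_iff[OF inj sub sub] by blast
  qed
  moreover have "(\<lambda>X. F ` X) ` (Z // RZ) = Om // RO"
  proof
    show "(\<lambda>X. F ` X) ` (Z // RZ) \<subseteq> Om // RO"
    proof
      fix Y assume "Y \<in> (\<lambda>X. F ` X) ` (Z // RZ)"
      then obtain v where v: "v \<in> Z" and "Y = F ` (RZ `` {v})" unfolding quotient_def by blast
      then show "Y \<in> Om // RO" using classes[OF v] F by (auto intro: quotientI)
    qed
    show "Om // RO \<subseteq> (\<lambda>X. F ` X) ` (Z // RZ)"
    proof
      fix Y assume "Y \<in> Om // RO"
      then obtain s where s: "s \<in> Om" and Y: "Y = RO `` {s}" unfolding quotient_def by blast
      then have "Y = F ` (RZ `` {G s})" using classes[of "G s"] G by simp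
      moreover have "RZ `` {G s} \<in> Z // RZ" using G s by (auto intro: quotientI)
      ultimately show "Y \<in> (\<lambda>X. F ` X) ` (Z // RZ)" by blast
    qed
  qed
  ultimately show ?thesis
    unfolding RZ_def[symmetric] RO_def[symmetric] bij_betw_def using classes by blast
qed

end

theorem proposition5p7:
  fixes sH :: "'k::comm_ring_1 \<Rightarrow> 'h::ring_1 \<Rightarrow> 'h"
    and Delta :: "'h \<Rightarrow> ('h \<times> 'h) list" and eps :: "'h \<Rightarrow> 'k" and S :: "'h \<Rightarrow> 'h"
    and sA :: "'k \<Rightarrow> 'a::ring_1 \<Rightarrow> 'a" and rho :: "'a \<Rightarrow> ('a \<times> 'h) list"
    and t u t0 u0 :: "'h \<Rightarrow> 'a"
  assumes "hopf_alg sH Delta eps S"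
    and "cocommutative sH Delta"
    and "comod_alg sH Delta eps sA rho"
    and "colinear sH sA Delta rho t"
    and "conv_inverse sH sA Delta eps t u"
    and "\<forall>x \<in> coinv sH sA rho. \<forall>y \<in> coinv sH sA rho. x * y = y * x"
    and t0: "t0 \<in> OmegaA sH sA Delta rho"
    and u0: "u0 = t0 \<circ> S"
  shows "bij_betw (\<lambda>v. conv Delta v t0) (Z1 sH sA Delta eps rho t u) (OmegaA sH sA Delta rho)
    \<and> (\<forall>s \<in> OmegaA sH sA Delta rho. conv Delta s u0 \<in> Z1 sH sA Delta eps rho t u
          \<and> conv Delta (conv Delta s u0) t0 = s)
    \<and> (\<forall>v \<in> Z1 sH sA Delta eps rho t u. conv Delta (conv Delta v t0) u0 = v)
    \<and> (\<forall>v \<in> Z1 sH sA Delta eps rho t u. \<forall>v1 \<in> Z1 sH sA Delta eps rho t u.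
          cohomologous sH sA Delta rho t u v v1
          \<longrightarrow> omega_equiv (coinv sH sA rho) (conv Delta v t0) (conv Delta v1 t0))
    \<and> (\<forall>s1 \<in> OmegaA sH sA Delta rho. \<forall>s2 \<in> OmegaA sH sA Delta rho.
          omega_equiv (coinv sH sA rho) s1 s2
          \<longrightarrow> cohomologous sH sA Delta rho t u (conv Delta s1 u0) (conv Delta s2 u0))
    \<and> (\<exists>G. bij_betw G
          (Z1 sH sA Delta eps rho t u //
             {(v, v1). v \<in> Z1 sH sA Delta eps rho t u \<and> v1 \<in> Z1 sH sA Delta eps rho t u
                       \<and> cohomologous sH sA Delta rho t u v v1})
          (OmegaA sH sA Delta rho //
             {(s1, s2). s1 \<in> OmegaA sH sA Delta rho \<and> s2 \<in> OmegaA sH sA Delta rho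
                        \<and> omega_equiv (coinv sH sA rho) s1 s2})
        \<and> (\<forall>v \<in> Z1 sH sA Delta eps rho t u.
             G ({(v, v1). v \<in> Z1 sH sA Delta eps rho t u \<and> v1 \<in> Z1 sH sA Delta eps rho t u
                       \<and> cohomologous sH sA Delta rho t u v v1} `` {v})
             = {(s1, s2). s1 \<in> OmegaA sH sA Delta rho \<and> s2 \<in> OmegaA sH sA Delta rho
                        \<and> omega_equiv (coinv sH sA rho) s1 s2} `` {conv Delta v t0}))"
proof -
  interpret cleft_cocomm_section sH Delta eps S sA rho t u t0
    using assms by unfold_locales (auto simp: coinv_def)
  have u0_eq: "u0 = (\<lambda>x. t0 (S x))" using u0 by (simp add: comp_def)
  let ?Z = "Z1 sH sA Delta eps rho t u" and ?O = "OmegaA sH sA Delta rho"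
  have to_OmegaA: "\<forall>v \<in> ?Z. conv Delta v t0 \<in> ?O" using conv_t0_OmegaA by blast
  have OmegaA_cancel: "\<forall>s \<in> ?O. conv Delta s u0 \<in> ?Z \<and> conv Delta (conv Delta s u0) t0 = s"
    unfolding u0_eq using conv_u0_Z1 conv_u0_t0_cancel OmegaA_klin by blast
  have Z1_cancel: "\<forall>v \<in> ?Z. conv Delta (conv Delta v t0) u0 = v"
    unfolding u0_eq using conv_t0_u0_cancel Z1D(1) by blast
  have cohomologous_equiv: "\<forall>v \<in> ?Z. \<forall>v1 \<in> ?Z. cohomologous sH sA Delta rho t u v v1
      \<longrightarrow> omega_equiv B (conv Delta v t0) (conv Delta v1 t0)"
    using cohomologous_omega_equiv by blast
  have equiv_cohomologous: "\<forall>s1 \<in> ?O. \<forall>s2 \<in> ?O. omega_equiv B s1 s2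
      \<longrightarrow> cohomologous sH sA Delta rho t u (conv Delta s1 u0) (conv Delta s2 u0)"
    unfolding u0_eq using omega_equiv_cohomologous by blast
  have "bij_betw (\<lambda>v. conv Delta v t0) ?Z ?O"
    using to_OmegaA OmegaA_cancel Z1_cancel by (intro bij_betw_byWitness[where f' = "\<lambda>s. conv Delta s u0"]) auto
  with OmegaA_cancel Z1_cancel cohomologous_equiv equiv_cohomologous show ?thesis
    using bij_betw_quotient_by_inverse[where R = "cohomologous sH sA Delta rho t u" and Q = "omega_equiv B",
        OF to_OmegaA OmegaA_cancel Z1_cancel cohomologous_equiv equiv_cohomologous] by blast
qed

end
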